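(* Let Knapsack be the parameterised query whose inputs are $n$ items with profits $p_1,\dots,p_n$ and weights $w_1,\dots,w_n$, a capacity bound $B$ and a profit threshold $T$ (all natural numbers given as $n$-bit numbers), with parameter $B$, asking whether there is $S\subseteq[n]$ with $\sum_{i\in S}p_i\ge T$ and $\sum_{i\in S}w_i\le B$. Let $\Delta_{\mathrm{KS}}$ be the set of change operations that arbitrarily replace the profit and the weight of one item, and that set $B$ or $T$ to any value. Then $(\mathrm{Knapsack},\Delta_{\mathrm{KS}})\in\mathrm{ParaSD}$.
   Context: Encoding: the domain is $[n]$; a binary relation $P$ with $(i,j)\in P$ iff the $j$-th bit of $p_i$ is $1$, analogously a binary relation $W$ for the weights, and unary relations $B$, $T$ for the bits of $B$ and $T$. The parameter $B$ may be any value up to $2^n-1$. $\mathrm{FO}{+}\mathrm{ar}$: order-invariant first-order logic with access to a linear order and compatible addition and multiplication. An advice is a computable map $\pi$ from $\mathbb{N}$ to structures over a fixed schema. A dynamic program with advice $(P,\pi)$ has auxiliary relations including a query relation and, for every change operation and auxiliary relation, an update $\mathrm{FO}{+}\mathrm{ar}$ formula over input, auxiliary and advice schema (with change parameters as free variables); states are $(D\uplus D_{\mathrm{adv}},\mathcal{I},\mathcal{A},\pi(k_{\max}))$ with arithmetic on $D\uplus D_{\mathrm{adv}}$ and auxiliary relations over $D\uplus D_{\mathrm{adv}}$; after a change each auxiliary relation is replaced by the result of its update formula on the old state. $(Q,\kappa,\Delta)\in\mathrm{ParaSD}$ if for some computable $f$ there is such a program with $|\pi(k)|\le f(k)$ for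 all $k$ such that, for every empty initial input, every $k_{\max}$ and every change sequence over $\Delta$ keeping the parameter at most $k_{\max}$ after every prefix, the query relation (starting from empty auxiliary relations and advice $\pi(k_{\max})$) equals the query answer on the current input. *)

theory Defs
  imports Main "HOL-Library.Nat_Bijection"
begin

datatype recf = RZ | RS | RProj nat | RComp recf "recf list" | RPrim recf recf | RMn recf

inductive reval :: "recf \<Rightarrow> nat list \<Rightarrow> nat \<Rightarrow> bool" where
  "reval RZ xs 0"
| "reval RS (x # xs) (Suc x)"
| "i < length xs \<Longrightarrow> reval (RProj i) xs (xs ! i)"
| "list_all2 (\<lambda>g y. reval g xs y) gs ys \<Longrightarrow> reval f ys z \<Longrightarrow> reval (RComp f gs) xs z"
| "reval f xs z \<Longrightarrow> reval (RPrim f g) (0 # xs) z"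
| "reval (RPrim f g) (n # xs) y \<Longrightarrow> reval g (y # n # xs) z \<Longrightarrow> reval (RPrim f g) (Suc n # xs) z"
| "reval f (n # xs) 0 \<Longrightarrow> (\<forall>m<n. \<exists>y. 0 < y \<and> reval f (m # xs) y) \<Longrightarrow> reval (RMn f) xs n"

definition computable1 :: "(nat \<Rightarrow> nat) \<Rightarrow> bool" where
  "computable1 g \<longleftrightarrow> (\<exists>r. \<forall>a. reval r [a] (g a))"

definition computable2 :: "(nat \<Rightarrow> nat \<Rightarrow> nat) \<Rightarrow> bool" where
  "computable2 g \<longleftrightarrow> (\<exists>r. \<forall>a b. reval r [a, b] (g a b))"

text \<open>Relation symbols: input relations P, W (binary), B, T (unary); auxiliary
  relations; advice relations; unary relational change parameters (new bit sets).\<close>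
datatype sym = SP | SW | SB | ST | SAux nat | SAdv nat | SCh nat

text \<open>Terms: first-order variables and element change parameters.\<close>
datatype tm = V nat | C nat

datatype fo =
    Atom sym "tm list"
  | Eq tm tm
  | Lt tm tm
  | Plus tm tm tm     \<comment> \<open>x + y = z\<close>
  | Times tm tm tm    \<comment> \<open>x * y = z\<close>
  | Neg fo
  | Conj fo fo
  | Exi nat fo

fun tval :: "nat list \<Rightarrow> (nat \<Rightarrow> nat) \<Rightarrow> tm \<Rightarrow> nat" where
  "tval ce env (V x) = env x"
| "tval ce env (C i) = (if i < length ce then ce ! i else 0)"

fun sat :: "nat \<Rightarrow> (sym \<Rightarrow> nat list set) \<Rightarrow> nat list \<Rightarrow> (nat \<Rightarrow> nat) \<Rightarrow> fo \<Rightarrow> bool" where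
  "sat N I ce env (Atom R ts) = (map (tval ce env) ts \<in> I R)"
| "sat N I ce env (Eq a b) = (tval ce env a = tval ce env b)"
| "sat N I ce env (Lt a b) = (tval ce env a < tval ce env b)"
| "sat N I ce env (Plus a b c) = (tval ce env a + tval ce env b = tval ce env c)"
| "sat N I ce env (Times a b c) = (tval ce env a * tval ce env b = tval ce env c)"
| "sat N I ce env (Neg \<phi>) = (\<not> sat N I ce env \<phi>)"
| "sat N I ce env (Conj \<phi> \<psi>) = (sat N I ce env \<phi> \<and> sat N I ce env \<psi>)"
| "sat N I ce env (Exi x \<phi>) = (\<exists>d<N. sat N I ce (env(x := d)) \<phi>)"

record ks_input =
  kp :: "nat \<Rightarrow> nat"
  kw :: "nat \<Rightarrow> nat"
  kB :: nat
  kT :: nat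

definition ks_empty :: ks_input where
  "ks_empty = \<lparr>kp = (\<lambda>_. 0), kw = (\<lambda>_. 0), kB = 0, kT = 0\<rparr>"

definition knapsack :: "nat \<Rightarrow> ks_input \<Rightarrow> bool" where
  "knapsack n x \<longleftrightarrow> (\<exists>S \<subseteq> {0..<n}. (\<Sum>i\<in>S. kp x i) \<ge> kT x \<and> (\<Sum>i\<in>S. kw x i) \<le> kB x)"

datatype ks_change = ChItem nat nat nat | ChB nat | ChT nat

datatype ks_op = OpItem | OpB | OpT

fun ks_valid :: "nat \<Rightarrow> ks_change \<Rightarrow> bool" where
  "ks_valid n (ChItem i p w) \<longleftrightarrow> i < n \<and> p < 2 ^ n \<and> w < 2 ^ n"
| "ks_valid n (ChB b) \<longleftrightarrow> b < 2 ^ n"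
| "ks_valid n (ChT t) \<longleftrightarrow> t < 2 ^ n"

fun ks_apply :: "ks_change \<Rightarrow> ks_input \<Rightarrow> ks_input" where
  "ks_apply (ChItem i p w) x = x\<lparr>kp := (kp x)(i := p), kw := (kw x)(i := w)\<rparr>"
| "ks_apply (ChB b) x = x\<lparr>kB := b\<rparr>"
| "ks_apply (ChT t) x = x\<lparr>kT := t\<rparr>"

fun ks_op_of :: "ks_change \<Rightarrow> ks_op" where
  "ks_op_of (ChItem _ _ _) = OpItem"
| "ks_op_of (ChB _) = OpB"
| "ks_op_of (ChT _) = OpT"

definition bitset :: "nat \<Rightarrow> nat \<Rightarrow> nat set" where
  "bitset n a = {j. j < n \<and> bit a j}"

fun ks_elems :: "ks_change \<Rightarrow> nat list" where
  "ks_elems (ChItem i _ _) = [i]"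
| "ks_elems (ChB _) = []"
| "ks_elems (ChT _) = []"

fun ks_sets :: "nat \<Rightarrow> ks_change \<Rightarrow> nat set list" where
  "ks_sets n (ChItem _ p w) = [bitset n p, bitset n w]"
| "ks_sets n (ChB b) = [bitset n b]"
| "ks_sets n (ChT t) = [bitset n t]"

text \<open>An advice structure: domain size m (elements 0..<m) and relations.\<close>
type_synonym advice = "nat \<times> (nat \<Rightarrow> nat list set)"

definition wf_advice :: "nat list \<Rightarrow> advice \<Rightarrow> bool" where
  "wf_advice adv_ar a \<longleftrightarrow> (\<forall>j. \<forall>t\<in>snd a j. j < length adv_ar \<and> length t = adv_ar ! j
                                     \<and> (\<forall>x\<in>set t. x < fst a))"

definition computable_advice :: "nat list \<Rightarrow> (nat \<Rightarrow> advice) \<Rightarrow> bool" where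
  "computable_advice adv_ar \<pi> \<longleftrightarrow> computable1 (\<lambda>k. fst (\<pi> k)) \<and>
     (\<forall>j<length adv_ar. computable2 (\<lambda>k c. if list_decode c \<in> snd (\<pi> k) j then 1 else 0))"

text \<open>The full structure over D \<uplus> D_adv = {0..<n+m}: input elements are 0..<n,
  advice elements are n..<n+m.\<close>
definition ks_struct :: "nat \<Rightarrow> ks_input \<Rightarrow> (nat \<Rightarrow> nat list set) \<Rightarrow> advice
                         \<Rightarrow> nat set list \<Rightarrow> sym \<Rightarrow> nat list set" where
  "ks_struct n x aux a cs R = (case R of
      SP \<Rightarrow> {[i, j] | i j. i < n \<and> j < n \<and> bit (kp x i) j}
    | SW \<Rightarrow> {[i, j] | i j. i < n \<and> j < n \<and> bit (kw x i) j}
    | SB \<Rightarrow> {[j] | j. j < n \<and> bit (kB x) j}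
    | ST \<Rightarrow> {[j] | j. j < n \<and> bit (kT x) j}
    | SAux j \<Rightarrow> aux j
    | SAdv j \<Rightarrow> map (\<lambda>v. v + n) ` snd a j
    | SCh k \<Rightarrow> (if k < length cs then {[j] | j. j \<in> cs ! k} else {}))"

text \<open>One step: every auxiliary relation is replaced by the result of its update
  formula evaluated on the old state (tuple variables are V 0, ..., V (r-1)).\<close>
definition ks_step :: "nat list \<Rightarrow> (ks_op \<Rightarrow> nat \<Rightarrow> fo) \<Rightarrow> nat \<Rightarrow> advice
                       \<Rightarrow> ks_change \<Rightarrow> ks_input \<times> (nat \<Rightarrow> nat list set)
                       \<Rightarrow> ks_input \<times> (nat \<Rightarrow> nat list set)" where
  "ks_step aux_ar upd n a c st =
     (let (x, aux) = st; N = n + fst a in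
      (ks_apply c x,
       \<lambda>j. if j < length aux_ar then
              {t. length t = aux_ar ! j \<and> (\<forall>v\<in>set t. v < N) \<and>
                  sat N (ks_struct n x aux a (ks_sets n c)) (ks_elems c)
                      (\<lambda>v. if v < length t then t ! v else 0) (upd (ks_op_of c) j)}
            else {}))"

definition ks_run :: "nat list \<Rightarrow> (ks_op \<Rightarrow> nat \<Rightarrow> fo) \<Rightarrow> nat \<Rightarrow> advice
                      \<Rightarrow> ks_change list \<Rightarrow> ks_input \<times> (nat \<Rightarrow> nat list set)" where
  "ks_run aux_ar upd n a cs = fold (ks_step aux_ar upd n a) cs (ks_empty, \<lambda>_. {})"

text \<open>(Knapsack, B, Delta_KS) is in ParaSD. Auxiliary relation 0 (arity 0) is the
  query relation.\<close>
definition knapsack_in_ParaSD :: bool where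
  "knapsack_in_ParaSD \<longleftrightarrow>
    (\<exists>(aux_ar :: nat list) (adv_ar :: nat list) (\<pi> :: nat \<Rightarrow> advice)
       (upd :: ks_op \<Rightarrow> nat \<Rightarrow> fo) (f :: nat \<Rightarrow> nat).
       aux_ar \<noteq> [] \<and> aux_ar ! 0 = 0 \<and>
       computable1 f \<and> computable_advice adv_ar \<pi> \<and>
       (\<forall>k. wf_advice adv_ar (\<pi> k) \<and> fst (\<pi> k) \<le> f k) \<and>
       (\<forall>n \<ge> 1. \<forall>kmax. \<forall>cs :: ks_change list.
          cs \<noteq> [] \<longrightarrow> (\<forall>c\<in>set cs. ks_valid n c) \<longrightarrow>
          (\<forall>l\<le>length cs. kB (fold ks_apply (take l cs) ks_empty) \<le> kmax) \<longrightarrow>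
          (([] \<in> snd (ks_run aux_ar upd n (\<pi> kmax) cs) 0) \<longleftrightarrow>
             knapsack n (fold ks_apply cs ks_empty))))"

end

theory Submission
  imports Defs
begin

text \<open>The program keeps, as an auxiliary relation of arity 4, the bits of the capped optimum
  \<open>OPT(s, t, b) = min (best profit of the items in [s, t) within capacity b) (2 ^ n)\<close> for all
  positions \<open>s, t\<close>, capacities \<open>b < 2 ^ (k + 1)\<close> and bit positions of the extended domain
  \<open>{0, \<dots>, n + 2 ^ (k + 1) - 1}\<close>; the advice supplies the \<open>2 ^ (k + 1)\<close> extra elements together
  with the pairs \<open>(j, 2 ^ j)\<close>, which make the bits of domain elements first-order definable.
  Changing item \<open>i\<close> only affects the intervals containing \<open>i\<close>, and for them
  \<open>OPT(s, t, b) = max {OPT(s, i, b1) + [w\<^sub>i \<le> b2] p\<^sub>i + OPT(i + 1, t, b3) | b1 + b2 + b3 = b}\<close>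
  in terms of the old table. This is first-order: sums and comparisons of numbers given by their
  bits are definable by carry look-ahead, and the maximum is the value of a splitting that no other
  splitting beats. Changing \<open>B\<close> or \<open>T\<close> leaves the table unchanged; the query compares
  \<open>OPT(0, n + 2 ^ (k + 1) - 1, B)\<close> with \<open>T\<close>.\<close>

section \<open>Bits of natural numbers\<close>

lemma mod_two_pow_Suc: "(a::nat) mod 2 ^ Suc j = (if bit a j then 2 ^ j else 0) + a mod 2 ^ j"
  using take_bit_Suc_from_most[of j a] by (simp add: take_bit_eq_mod)

lemma not_bit_ge_length: "(a::nat) < 2 ^ N \<Longrightarrow> N \<le> j \<Longrightarrow> \<not> bit a j"
  by (metis bit_take_bit_iff leD take_bit_nat_eq_self_iff)

lemma bit_mod_two_pow: "l < N \<Longrightarrow> bit ((a::nat) mod 2 ^ N) l = bit a l"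
  by (simp add: bit_take_bit_iff flip: take_bit_eq_mod)

lemma ex_less_cong: "(\<And>j. j < N \<Longrightarrow> P j \<longleftrightarrow> Q j) \<Longrightarrow> (\<exists>j<N. P j) \<longleftrightarrow> (\<exists>j<N. Q j)"
  by blast

lemma less_by_top_bit:
  fixes a b :: nat
  assumes "a < 2 ^ Suc N" and "b < 2 ^ Suc N"
  shows "a < b \<longleftrightarrow> (if bit a N = bit b N then a mod 2 ^ N < b mod 2 ^ N else bit b N)"
proof -
  have "(if bit a N then 2 ^ N else 0) + a mod 2 ^ N = a" "(if bit b N then 2 ^ N else 0) + b mod 2 ^ N = b"
    using mod_two_pow_Suc[of a N] mod_two_pow_Suc[of b N] assms by simp_all
  moreover have "a mod 2 ^ N < 2 ^ N" "b mod 2 ^ N < 2 ^ N" by simp_all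
  ultimately show ?thesis by (cases "bit a N"; cases "bit b N") (simp_all, linarith+)
qed

lemma less_iff_highest_diff_bit:
  fixes a b :: nat
  assumes "a < 2 ^ N" and "b < 2 ^ N"
  shows "a < b \<longleftrightarrow>
    (\<exists>j<N. \<not> bit a j \<and> bit b j \<and> (\<forall>l. j < l \<and> l < N \<longrightarrow> (bit a l \<longleftrightarrow> bit b l)))"
  using assms
proof (induction N arbitrary: a b)
  case 0
  then show ?case by simp
next
  case (Suc N)
  have low: "a mod 2 ^ N < 2 ^ N" "b mod 2 ^ N < 2 ^ N" by simp_all
  have "a mod 2 ^ N < b mod 2 ^ N \<longleftrightarrow>
      (\<exists>j<N. \<not> bit a j \<and> bit b j \<and> (\<forall>l. j < l \<and> l < N \<longrightarrow> (bit a l \<longleftrightarrow> bit b l)))"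
    unfolding Suc.IH[OF low] by (intro ex_less_cong) (auto simp: bit_mod_two_pow)
  then show ?case
    unfolding less_by_top_bit[OF Suc.prems] by (auto simp: less_Suc_eq)
qed

definition carry :: "nat \<Rightarrow> nat \<Rightarrow> nat \<Rightarrow> bool" where
  "carry a b j \<longleftrightarrow> 2 ^ j \<le> a mod 2 ^ j + b mod 2 ^ j"

lemma bit_add_iff_carry: "bit (a + b) j \<longleftrightarrow> ((bit a j \<noteq> bit b j) \<noteq> carry a b j)"
proof -
  have lt: "a mod 2 ^ j + b mod 2 ^ j < 2 * 2 ^ j"
    using mod_less_divisor[of "2 ^ j" a] mod_less_divisor[of "2 ^ j" b]
    by (simp add: add_strict_mono mult_2)
  have "(a + b) div 2 ^ j = a div 2 ^ j + b div 2 ^ j + (a mod 2 ^ j + b mod 2 ^ j) div 2 ^ j"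
    by (rule div_add1_eq)
  moreover have "(a mod 2 ^ j + b mod 2 ^ j) div 2 ^ j = (if carry a b j then 1 else 0)"
    using lt unfolding carry_def
    by (smt (verit, best) Euclidean_Rings.div_eq_0_iff bot_nat_0.not_eq_extremum div_greater_zero_iff
        less_mult_imp_div_less mod2_gr_0 mod_eq_self_iff_div_eq_0 power_eq_0_iff)
  ultimately show ?thesis by (auto simp: bit_iff_odd)
qed

lemma carry_Suc: "carry a b (Suc j) \<longleftrightarrow> (bit a j \<and> bit b j) \<or> ((bit a j \<or> bit b j) \<and> carry a b j)"
proof -
  have "a mod 2 ^ j < 2 ^ j" "b mod 2 ^ j < 2 ^ j" by simp_all
  then show ?thesis
    unfolding carry_def mod_two_pow_Suc[of a] mod_two_pow_Suc[of b]
    by (auto simp: mult_2) (use \<open>a mod 2 ^ j < 2 ^ j\<close> \<open>b mod 2 ^ j < 2 ^ j\<close> in linarith)+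
qed

lemma carry_iff: "carry a b j \<longleftrightarrow> (\<exists>k<j. bit a k \<and> bit b k \<and> (\<forall>l. k < l \<and> l < j \<longrightarrow> bit a l \<or> bit b l))"
proof (induction j)
  case 0
  then show ?case by (simp add: carry_def)
next
  case (Suc j)
  show ?case unfolding carry_Suc Suc by (auto simp: less_Suc_eq)
qed

lemma two_pow_le_iff_bit: "2 ^ n \<le> (m::nat) \<longleftrightarrow> (\<exists>j\<ge>n. bit m j)"
proof -
  have "2 ^ n \<le> m \<longleftrightarrow> m div 2 ^ n \<noteq> 0" by (simp add: div_eq_0_iff not_less)
  also have "\<dots> \<longleftrightarrow> (\<exists>i. bit m (n + i))"
    using bit_eq_iff[of "m div 2 ^ n" 0] by (auto simp: bit_iff_odd div_exp_eq)
  also have "\<dots> \<longleftrightarrow> (\<exists>j\<ge>n. bit m j)"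
    by (metis le_add1 le_add_diff_inverse)
  finally show ?thesis .
qed

lemma bit_min_two_pow: "bit (min m (2 ^ n)) j \<longleftrightarrow> (if 2 ^ n \<le> (m::nat) then j = n else bit m j)"
  by (auto simp: min_def bit_exp_iff)

section \<open>Maxima over splittings of a number into three summands\<close>

lemma finite_splits3: "finite {f b1 b2 b3 | b1 b2 b3. b1 + b2 + b3 = (b::nat)}"
proof -
  have "{f b1 b2 b3 | b1 b2 b3. b1 + b2 + b3 = b}
      \<subseteq> (\<lambda>(b1, b2, b3). f b1 b2 b3) ` ({..b} \<times> {..b} \<times> {..b})"
  proof
    fix v assume "v \<in> {f b1 b2 b3 | b1 b2 b3. b1 + b2 + b3 = b}"
    then obtain b1 b2 b3 where "v = f b1 b2 b3" "b1 + b2 + b3 = b" by blast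
    then show "v \<in> (\<lambda>(b1, b2, b3). f b1 b2 b3) ` ({..b} \<times> {..b} \<times> {..b})"
      by (intro image_eqI[of _ _ "(b1, b2, b3)"]) auto
  qed
  then show ?thesis by (rule finite_subset) auto
qed

lemma splits3_nonempty: "{f b1 b2 b3 | b1 b2 b3. b1 + b2 + b3 = (b::nat)} \<noteq> {}"
proof -
  have "f b 0 0 \<in> {f b1 b2 b3 | b1 b2 b3. b1 + b2 + b3 = b}" by force
  then show ?thesis by blast
qed

lemma Max_splits3_in:
  obtains b1 b2 b3 where "b1 + b2 + b3 = b" "Max {f b1 b2 b3 | b1 b2 b3. b1 + b2 + b3 = (b::nat)} = f b1 b2 b3"
  using Max_in[OF finite_splits3 splits3_nonempty, of f b] by blast

lemma Max_splits3_ge: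
  "b1 + b2 + b3 = b \<Longrightarrow> f b1 b2 b3 \<le> Max {f b1 b2 b3 | b1 b2 b3. b1 + b2 + b3 = (b::nat)}"
  by (rule Max_ge[OF finite_splits3]) blast

lemma bex3I: "a < N \<Longrightarrow> b < N \<Longrightarrow> c < N \<Longrightarrow> P a b c \<Longrightarrow> \<exists>a<N. \<exists>b<N. \<exists>c<N. P a b c"
  by blast

lemma bit_Max_splits3_iff:
  fixes G :: "nat \<Rightarrow> nat \<Rightarrow> nat \<Rightarrow> nat"
  assumes "b < N"
  shows "(\<exists>d1<N. \<exists>d2<N. \<exists>d3<N. d1 + d2 + d3 = b \<and>
            (\<forall>c1<N. \<forall>c2<N. \<forall>c3<N. c1 + c2 + c3 = b \<longrightarrow> \<not> G d1 d2 d3 < G c1 c2 c3) \<and> bit (G d1 d2 d3) j)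
      \<longleftrightarrow> bit (Max {G b1 b2 b3 | b1 b2 b3. b1 + b2 + b3 = b}) j" (is "?lhs \<longleftrightarrow> _")
proof
  assume ?lhs
  then obtain d1 d2 d3 where d: "d1 + d2 + d3 = b" "bit (G d1 d2 d3) j"
    and best: "\<forall>c1<N. \<forall>c2<N. \<forall>c3<N. c1 + c2 + c3 = b \<longrightarrow> \<not> G d1 d2 d3 < G c1 c2 c3"
    by blast
  have "Max {G b1 b2 b3 | b1 b2 b3. b1 + b2 + b3 = b} = G d1 d2 d3"
  proof (rule Max_eqI[OF finite_splits3])
    fix v assume "v \<in> {G b1 b2 b3 | b1 b2 b3. b1 + b2 + b3 = b}"
    then obtain c1 c2 c3 where c: "v = G c1 c2 c3" "c1 + c2 + c3 = b" by blast
    moreover have "c1 < N" "c2 < N" "c3 < N" using c(2) assms by linarith+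
    ultimately show "v \<le> G d1 d2 d3" using best by (simp add: not_less)
  qed (use d in blast)
  then show "bit (Max {G b1 b2 b3 | b1 b2 b3. b1 + b2 + b3 = b}) j" using d by simp
next
  assume max: "bit (Max {G b1 b2 b3 | b1 b2 b3. b1 + b2 + b3 = b}) j"
  obtain d1 d2 d3 where d: "d1 + d2 + d3 = b" "Max {G b1 b2 b3 | b1 b2 b3. b1 + b2 + b3 = b} = G d1 d2 d3"
    by (rule Max_splits3_in)
  have "d1 < N" "d2 < N" "d3 < N" using d(1) assms by linarith+
  moreover have "\<not> G d1 d2 d3 < G c1 c2 c3" if "c1 + c2 + c3 = b" for c1 c2 c3
    using Max_splits3_ge[OF that, of G] d(2) by simp
  ultimately show ?lhs using d(1,2) max by (intro bex3I[of d1 N d2 d3]) auto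
qed

lemma min_Max_splits3_cong:
  fixes F G :: "nat \<Rightarrow> nat \<Rightarrow> nat \<Rightarrow> nat"
  assumes le: "\<And>b1 b2 b3. b1 + b2 + b3 = b \<Longrightarrow> F b1 b2 b3 \<le> G b1 b2 b3"
    and cap: "\<And>b1 b2 b3. b1 + b2 + b3 = b \<Longrightarrow> min (F b1 b2 b3) c = min (G b1 b2 b3) c"
  shows "min (Max {F b1 b2 b3 | b1 b2 b3. b1 + b2 + b3 = b}) c
       = min (Max {G b1 b2 b3 | b1 b2 b3. b1 + b2 + b3 = b}) c"
proof (rule antisym)
  obtain a1 a2 a3 where a: "a1 + a2 + a3 = b" "Max {F b1 b2 b3 | b1 b2 b3. b1 + b2 + b3 = b} = F a1 a2 a3"
    by (rule Max_splits3_in)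
  then show "min (Max {F b1 b2 b3 | b1 b2 b3. b1 + b2 + b3 = b}) c
      \<le> min (Max {G b1 b2 b3 | b1 b2 b3. b1 + b2 + b3 = b}) c"
    using le[OF a(1)] Max_splits3_ge[OF a(1), of G] by (simp add: min.coboundedI1)
next
  obtain a1 a2 a3 where a: "a1 + a2 + a3 = b" "Max {G b1 b2 b3 | b1 b2 b3. b1 + b2 + b3 = b} = G a1 a2 a3"
    by (rule Max_splits3_in)
  have "min (Max {G b1 b2 b3 | b1 b2 b3. b1 + b2 + b3 = b}) c = min (F a1 a2 a3) c"
    using a(2) cap[OF a(1), symmetric] by (simp only:)
  also have "\<dots> \<le> min (Max {F b1 b2 b3 | b1 b2 b3. b1 + b2 + b3 = b}) c"
    using Max_splits3_ge[OF a(1), of F] by (rule min.mono) simp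
  finally show "min (Max {G b1 b2 b3 | b1 b2 b3. b1 + b2 + b3 = b}) c
      \<le> min (Max {F b1 b2 b3 | b1 b2 b3. b1 + b2 + b3 = b}) c" .
qed

section \<open>The knapsack optimum\<close>

definition ks_opt :: "ks_input \<Rightarrow> nat set \<Rightarrow> nat \<Rightarrow> nat" where
  "ks_opt x A b = Max ((\<lambda>S. \<Sum>i\<in>S. kp x i) ` {S. S \<subseteq> A \<and> (\<Sum>i\<in>S. kw x i) \<le> b})"

lemma finite_feasible_sets: "finite A \<Longrightarrow> finite {S. S \<subseteq> A \<and> (\<Sum>i\<in>S. kw x i) \<le> b}"
  by (rule finite_subset[of _ "Pow A"]) auto

lemma ks_opt_ge:
  "finite A \<Longrightarrow> S \<subseteq> A \<Longrightarrow> (\<Sum>i\<in>S. kw x i) \<le> b \<Longrightarrow> (\<Sum>i\<in>S. kp x i) \<le> ks_opt x A b"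
  unfolding ks_opt_def by (rule Max_ge) (auto intro: finite_imageI finite_feasible_sets)

lemma ks_opt_obtain:
  assumes "finite A"
  obtains S where "S \<subseteq> A" "(\<Sum>i\<in>S. kw x i) \<le> b" "(\<Sum>i\<in>S. kp x i) = ks_opt x A b"
proof -
  have "ks_opt x A b \<in> (\<lambda>S. \<Sum>i\<in>S. kp x i) ` {S. S \<subseteq> A \<and> (\<Sum>i\<in>S. kw x i) \<le> b}"
    unfolding ks_opt_def
    by (rule Max_in) (auto intro: finite_imageI finite_feasible_sets[OF assms])
  then show ?thesis using that by auto
qed

lemma ks_opt_eqI:
  assumes "finite A" and "\<And>S. S \<subseteq> A \<Longrightarrow> (\<Sum>i\<in>S. kw x i) \<le> b \<Longrightarrow> (\<Sum>i\<in>S. kp x i) \<le> v"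
    and "S0 \<subseteq> A" and "(\<Sum>i\<in>S0. kw x i) \<le> b" and "(\<Sum>i\<in>S0. kp x i) = v"
  shows "ks_opt x A b = v"
proof (rule antisym)
  obtain S where "S \<subseteq> A" "(\<Sum>i\<in>S. kw x i) \<le> b" "(\<Sum>i\<in>S. kp x i) = ks_opt x A b"
    using ks_opt_obtain[OF assms(1)] .
  then show "ks_opt x A b \<le> v" using assms(2) by metis
  show "v \<le> ks_opt x A b" using ks_opt_ge[OF assms(1,3,4)] assms(5) by simp
qed

lemma ks_opt_cong:
  assumes "\<And>i. i \<in> A \<Longrightarrow> kp x i = kp y i \<and> kw x i = kw y i"
  shows "ks_opt x A b = ks_opt y A b"
proof -
  have "(\<Sum>i\<in>S. kw x i) = (\<Sum>i\<in>S. kw y i)" "(\<Sum>i\<in>S. kp x i) = (\<Sum>i\<in>S. kp y i)" if "S \<subseteq> A" for S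
    using assms that by (auto intro!: sum.cong)
  then show ?thesis
    unfolding ks_opt_def by (intro arg_cong[where f = Max] image_cong Collect_cong) auto
qed

lemma ks_opt_empty_input: "ks_opt ks_empty A b = 0"
proof -
  have "(\<lambda>S. \<Sum>i\<in>S. kp ks_empty i) ` {S. S \<subseteq> A \<and> (\<Sum>i\<in>S. kw ks_empty i) \<le> b} = {0}"
    unfolding ks_empty_def by auto
  then show ?thesis unfolding ks_opt_def by simp
qed

lemma ks_opt_zero_profit_ext:
  assumes "finite A'" and "A \<subseteq> A'" and "\<And>i. i \<in> A' - A \<Longrightarrow> kp x i = 0"
  shows "ks_opt x A' b = ks_opt x A b"
proof -
  have fin: "finite A" using assms(1,2) finite_subset by blast
  obtain S where S: "S \<subseteq> A" "(\<Sum>i\<in>S. kw x i) \<le> b" "(\<Sum>i\<in>S. kp x i) = ks_opt x A b"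
    using ks_opt_obtain[OF fin] .
  show ?thesis
  proof (rule ks_opt_eqI[OF assms(1) _ _ S(2,3)])
    fix S' assume S': "S' \<subseteq> A'" "(\<Sum>i\<in>S'. kw x i) \<le> b"
    have fin': "finite S'" using S'(1) assms(1) finite_subset by blast
    have "(\<Sum>i\<in>S'. kp x i) = (\<Sum>i\<in>S' \<inter> A. kp x i) + (\<Sum>i\<in>S' - A. kp x i)"
      by (rule sum.Int_Diff[OF fin'])
    also have "(\<Sum>i\<in>S' - A. kp x i) = 0" using assms(3) S'(1) by (intro sum.neutral) auto
    also have "(\<Sum>i\<in>S' \<inter> A. kw x i) \<le> (\<Sum>i\<in>S'. kw x i)" using fin' by (intro sum_mono2) auto
    then have "(\<Sum>i\<in>S' \<inter> A. kp x i) \<le> ks_opt x A b" using S'(2) by (intro ks_opt_ge[OF fin]) auto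
    finally show "(\<Sum>i\<in>S'. kp x i) \<le> ks_opt x A b" by simp
  qed (use S(1) assms(2) in auto)
qed

lemma knapsack_iff_ks_opt: "knapsack n x \<longleftrightarrow> kT x \<le> ks_opt x {0..<n} (kB x)"
proof
  assume "knapsack n x"
  then obtain S where "S \<subseteq> {0..<n}" "kT x \<le> (\<Sum>i\<in>S. kp x i)" "(\<Sum>i\<in>S. kw x i) \<le> kB x"
    unfolding knapsack_def by auto
  then show "kT x \<le> ks_opt x {0..<n} (kB x)" using ks_opt_ge[of "{0..<n}" S x "kB x"] by auto
next
  assume "kT x \<le> ks_opt x {0..<n} (kB x)"
  moreover obtain S where "S \<subseteq> {0..<n}" "(\<Sum>i\<in>S. kw x i) \<le> kB x"
    "(\<Sum>i\<in>S. kp x i) = ks_opt x {0..<n} (kB x)"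
    using ks_opt_obtain[of "{0..<n}" x "kB x"] by blast
  ultimately show "knapsack n x" unfolding knapsack_def by auto
qed

lemma sum_le_Max_split_ks_opt:
  assumes fin: "finite A" "finite B" and disj: "A \<inter> B = {}" "i \<notin> A" "i \<notin> B"
    and S: "S \<subseteq> A \<union> {i} \<union> B" "(\<Sum>j\<in>S. kw x j) \<le> b"
  shows "(\<Sum>j\<in>S. kp x j) \<le> Max {ks_opt x A b1 + (if kw x i \<le> b2 then kp x i else 0) + ks_opt x B b3
      | b1 b2 b3. b1 + b2 + b3 = b}"
proof -
  have part: "S = (S \<inter> A) \<union> (S \<inter> {i}) \<union> (S \<inter> B)" and
    "finite (S \<inter> A)" "finite (S \<inter> {i})" "finite (S \<inter> B)"
    "(S \<inter> A) \<inter> (S \<inter> {i}) = {}" "((S \<inter> A) \<union> (S \<inter> {i})) \<inter> (S \<inter> B) = {}"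
    using S(1) fin disj by auto
  then have sum_split: "(\<Sum>j\<in>S. f j) = (\<Sum>j\<in>S \<inter> A. f j) + (\<Sum>j\<in>S \<inter> {i}. f j) + (\<Sum>j\<in>S \<inter> B. f j)"
    for f :: "nat \<Rightarrow> nat"
    by (metis sum.union_disjoint finite_UnI)
  define c1 c2 where "c1 = (\<Sum>j\<in>S \<inter> A. kw x j)" and "c2 = (\<Sum>j\<in>S \<inter> {i}. kw x j)"
  have c3: "(\<Sum>j\<in>S \<inter> B. kw x j) \<le> b - c1 - c2" and "c1 + c2 + (b - c1 - c2) = b"
    using S(2) sum_split[of "kw x"] unfolding c1_def c2_def by linarith+
  have "(\<Sum>j\<in>S \<inter> A. kp x j) \<le> ks_opt x A c1"
    unfolding c1_def by (rule ks_opt_ge[OF fin(1)]) auto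
  moreover have "(\<Sum>j\<in>S \<inter> B. kp x j) \<le> ks_opt x B (b - c1 - c2)"
    using c3 by (intro ks_opt_ge[OF fin(2)]) auto
  moreover have "(\<Sum>j\<in>S \<inter> {i}. kp x j) \<le> (if kw x i \<le> c2 then kp x i else 0)"
    unfolding c2_def by (cases "i \<in> S") auto
  ultimately have "(\<Sum>j\<in>S. kp x j)
      \<le> ks_opt x A c1 + (if kw x i \<le> c2 then kp x i else 0) + ks_opt x B (b - c1 - c2)"
    using sum_split[of "kp x"] by linarith
  also have "\<dots> \<le> Max {ks_opt x A b1 + (if kw x i \<le> b2 then kp x i else 0) + ks_opt x B b3
      | b1 b2 b3. b1 + b2 + b3 = b}"
    by (rule Max_splits3_ge) fact
  finally show ?thesis .
qed

lemma ks_opt_split3: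
  assumes fin: "finite A" "finite B" and disj: "A \<inter> B = {}" "i \<notin> A" "i \<notin> B"
  shows "ks_opt x (A \<union> {i} \<union> B) b = Max {ks_opt x A b1 + (if kw x i \<le> b2 then kp x i else 0)
      + ks_opt x B b3 | b1 b2 b3. b1 + b2 + b3 = b}"
proof -
  obtain b1 b2 b3 where b: "b1 + b2 + b3 = b"
    and max: "Max {ks_opt x A b1 + (if kw x i \<le> b2 then kp x i else 0) + ks_opt x B b3
      | b1 b2 b3. b1 + b2 + b3 = b} = ks_opt x A b1 + (if kw x i \<le> b2 then kp x i else 0) + ks_opt x B b3"
    by (rule Max_splits3_in)
  obtain SA where SA: "SA \<subseteq> A" "(\<Sum>j\<in>SA. kw x j) \<le> b1" "(\<Sum>j\<in>SA. kp x j) = ks_opt x A b1"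
    using ks_opt_obtain[OF fin(1)] .
  obtain SB where SB: "SB \<subseteq> B" "(\<Sum>j\<in>SB. kw x j) \<le> b3" "(\<Sum>j\<in>SB. kp x j) = ks_opt x B b3"
    using ks_opt_obtain[OF fin(2)] .
  define SI where "SI = (if kw x i \<le> b2 then {i} else {})"
  have "finite SA" "finite SB" "finite SI" "SA \<inter> SI = {}" "(SA \<union> SI) \<inter> SB = {}"
    using SA(1) SB(1) fin disj finite_subset unfolding SI_def by auto
  then have sum_split: "(\<Sum>j\<in>SA \<union> SI \<union> SB. f j) = (\<Sum>j\<in>SA. f j) + (\<Sum>j\<in>SI. f j) + (\<Sum>j\<in>SB. f j)"
    for f :: "nat \<Rightarrow> nat"
    by (simp add: sum.union_disjoint)
  show ?thesis
  proof (rule ks_opt_eqI)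
    show "SA \<union> SI \<union> SB \<subseteq> A \<union> {i} \<union> B" using SA(1) SB(1) unfolding SI_def by auto
    show "(\<Sum>j\<in>SA \<union> SI \<union> SB. kw x j) \<le> b"
      using sum_split[of "kw x"] SA(2) SB(2) b unfolding SI_def by auto
    show "(\<Sum>j\<in>SA \<union> SI \<union> SB. kp x j) = Max {ks_opt x A b1 + (if kw x i \<le> b2 then kp x i else 0)
      + ks_opt x B b3 | b1 b2 b3. b1 + b2 + b3 = b}"
      using sum_split[of "kp x"] SA(3) SB(3) max unfolding SI_def by simp
  qed (use fin disj sum_le_Max_split_ks_opt in auto)
qed

text \<open>The stored optima are capped at \<open>2 ^ n > T\<close>, so that they and sums of three of them
  fit into the \<open>N\<close> bits a domain element can index.\<close>

definition capped_opt :: "nat \<Rightarrow> nat \<Rightarrow> ks_input \<Rightarrow> nat \<Rightarrow> nat \<Rightarrow> nat \<Rightarrow> nat" where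
  "capped_opt n kk x s t b = (if b < 2 ^ Suc kk then min (ks_opt x {s..<t} b) (2 ^ n) else 0)"

lemma capped_opt_le: "capped_opt n kk x s t b \<le> 2 ^ n"
  unfolding capped_opt_def by auto

lemma capped_opt_cong:
  "(\<And>i. s \<le> i \<Longrightarrow> i < t \<Longrightarrow> kp x i = kp y i \<and> kw x i = kw y i)
    \<Longrightarrow> capped_opt n kk x s t b = capped_opt n kk y s t b"
  unfolding capped_opt_def by (subst ks_opt_cong[of "{s..<t}" x y]) auto

lemma knapsack_iff_capped_opt:
  assumes "\<And>i. n \<le> i \<Longrightarrow> kp x i = 0" and "kT x < 2 ^ n" and "kB x < 2 ^ Suc kk"
  shows "knapsack n x \<longleftrightarrow> \<not> capped_opt n kk x 0 (n + 2 ^ Suc kk - 1) (kB x) < kT x"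
proof -
  have "(0::nat) < 2 ^ Suc kk" by simp
  then have "n \<le> n + 2 ^ Suc kk - 1" by linarith
  then have "ks_opt x {0..<n + 2 ^ Suc kk - 1} (kB x) = ks_opt x {0..<n} (kB x)"
    by (intro ks_opt_zero_profit_ext) (use assms(1) in auto)
  then show ?thesis
    unfolding capped_opt_def knapsack_iff_ks_opt using assms(2,3) by auto
qed

text \<open>The middle summand \<open>b2\<close> enters modulo \<open>2 ^ Suc kk\<close> because the program reads it off a
  domain element with \<open>elem_bits_form\<close>.\<close>

definition item_split_value :: "nat \<Rightarrow> nat \<Rightarrow> ks_input \<Rightarrow> nat \<Rightarrow> nat \<Rightarrow> nat \<Rightarrow> nat \<Rightarrow> nat \<Rightarrow> nat
    \<Rightarrow> nat \<Rightarrow> nat \<Rightarrow> nat \<Rightarrow> nat" where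
  "item_split_value n kk x p w s i iv tv b1 b2 b3 =
     capped_opt n kk x s i b1 + (if \<not> b2 mod 2 ^ Suc kk < w then p else 0) + capped_opt n kk x iv tv b3"

lemma capped_opt_item_update:
  assumes "s \<le> i" "i < t" and b: "b < 2 ^ Suc kk"
  shows "min (Max {item_split_value n kk x p w s i (Suc i) t b1 b2 b3 | b1 b2 b3. b1 + b2 + b3 = b}) (2 ^ n)
       = capped_opt n kk (ks_apply (ChItem i p w) x) s t b"
proof -
  let ?x = "ks_apply (ChItem i p w) x"
  let ?val = "\<lambda>b1 b2 b3. ks_opt ?x {s..<i} b1 + (if kw ?x i \<le> b2 then kp ?x i else 0) + ks_opt ?x {Suc i..<t} b3"
  have "{s..<t} = {s..<i} \<union> {i} \<union> {Suc i..<t}" using assms(1,2) by auto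
  then have split: "ks_opt ?x {s..<t} b = Max {?val b1 b2 b3 | b1 b2 b3. b1 + b2 + b3 = b}"
    by (simp only:) (rule ks_opt_split3; simp)
  have unchanged: "ks_opt x {s..<i} b1 = ks_opt ?x {s..<i} b1" "ks_opt x {Suc i..<t} b3 = ks_opt ?x {Suc i..<t} b3"
    for b1 b3 by (rule ks_opt_cong; simp)+
  have "min (Max {item_split_value n kk x p w s i (Suc i) t b1 b2 b3 | b1 b2 b3. b1 + b2 + b3 = b}) (2 ^ n)
      = min (Max {?val b1 b2 b3 | b1 b2 b3. b1 + b2 + b3 = b}) (2 ^ n)"
  proof (rule min_Max_splits3_cong)
    fix b1 b2 b3 assume "b1 + b2 + b3 = b"
    then have "b1 < 2 ^ Suc kk" "b2 < 2 ^ Suc kk" "b3 < 2 ^ Suc kk" using b by linarith+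
    then have val: "item_split_value n kk x p w s i (Suc i) t b1 b2 b3
        = min (ks_opt ?x {s..<i} b1) (2 ^ n) + (if kw ?x i \<le> b2 then kp ?x i else 0)
          + min (ks_opt ?x {Suc i..<t} b3) (2 ^ n)"
      unfolding item_split_value_def capped_opt_def unchanged by (simp add: not_less)
    show "item_split_value n kk x p w s i (Suc i) t b1 b2 b3 \<le> ?val b1 b2 b3"
      unfolding val by (intro add_mono) auto
    show "min (item_split_value n kk x p w s i (Suc i) t b1 b2 b3) (2 ^ n) = min (?val b1 b2 b3) (2 ^ n)"
      unfolding val by (auto simp: min_def)
  qed
  also have "\<dots> = capped_opt n kk ?x s t b" unfolding capped_opt_def split using b by simp
  finally show ?thesis .
qed

section \<open>First-order definability of numbers\<close>

definition fo_or :: "fo \<Rightarrow> fo \<Rightarrow> fo" where "fo_or \<phi> \<psi> = Neg (Conj (Neg \<phi>) (Neg \<psi>))"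
definition fo_imp :: "fo \<Rightarrow> fo \<Rightarrow> fo" where "fo_imp \<phi> \<psi> = Neg (Conj \<phi> (Neg \<psi>))"
definition fo_iff :: "fo \<Rightarrow> fo \<Rightarrow> fo" where "fo_iff \<phi> \<psi> = Conj (fo_imp \<phi> \<psi>) (fo_imp \<psi> \<phi>)"
definition fo_xor :: "fo \<Rightarrow> fo \<Rightarrow> fo" where "fo_xor \<phi> \<psi> = Neg (fo_iff \<phi> \<psi>)"
definition fo_all :: "nat \<Rightarrow> fo \<Rightarrow> fo" where "fo_all x \<phi> = Neg (Exi x (Neg \<phi>))"

lemma sat_fo_connectives [simp]:
  "sat N I ce e (fo_or \<phi> \<psi>) \<longleftrightarrow> sat N I ce e \<phi> \<or> sat N I ce e \<psi>"
  "sat N I ce e (fo_imp \<phi> \<psi>) \<longleftrightarrow> (sat N I ce e \<phi> \<longrightarrow> sat N I ce e \<psi>)"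
  "sat N I ce e (fo_iff \<phi> \<psi>) \<longleftrightarrow> (sat N I ce e \<phi> \<longleftrightarrow> sat N I ce e \<psi>)"
  "sat N I ce e (fo_xor \<phi> \<psi>) \<longleftrightarrow> sat N I ce e \<phi> \<noteq> sat N I ce e \<psi>"
  "sat N I ce e (fo_all x \<phi>) \<longleftrightarrow> (\<forall>d<N. sat N I ce (e(x := d)) \<phi>)"
  by (auto simp: fo_or_def fo_imp_def fo_iff_def fo_xor_def fo_all_def)

text \<open>A number \<open>v < 2 ^ N\<close> is represented by a family of formulas \<open>\<phi> l y\<close> stating that bit \<open>e y\<close>
  of \<open>v\<close> is set. The formula \<open>\<phi> l y\<close> may use the variables \<open>l, l + 1, \<dots>\<close> as bound variables; the
  represented value may depend on the variables below a bound \<open>k \<le> l\<close>.\<close>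

type_synonym num_form = "nat \<Rightarrow> nat \<Rightarrow> fo"
type_synonym prop_form = "nat \<Rightarrow> fo"

definition env_in :: "nat \<Rightarrow> nat \<Rightarrow> (nat \<Rightarrow> nat) \<Rightarrow> bool" where
  "env_in N l e \<longleftrightarrow> (\<forall>z<l. e z < N)"

definition depends_below :: "nat \<Rightarrow> ((nat \<Rightarrow> nat) \<Rightarrow> 'a) \<Rightarrow> bool" where
  "depends_below k f \<longleftrightarrow> (\<forall>e e'. (\<forall>z<k. e z = e' z) \<longrightarrow> f e = f e')"

definition defines_num :: "nat \<Rightarrow> (sym \<Rightarrow> nat list set) \<Rightarrow> nat list \<Rightarrow> nat \<Rightarrow> num_form
    \<Rightarrow> ((nat \<Rightarrow> nat) \<Rightarrow> nat) \<Rightarrow> bool" where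
  "defines_num N I ce k \<phi> v \<longleftrightarrow>
     (\<forall>l e y. k \<le> l \<longrightarrow> y < l \<longrightarrow> env_in N l e \<longrightarrow> (sat N I ce e (\<phi> l y) \<longleftrightarrow> bit (v e) (e y)))
     \<and> depends_below k v \<and> (\<forall>e. v e < 2 ^ N)"

definition defines_prop :: "nat \<Rightarrow> (sym \<Rightarrow> nat list set) \<Rightarrow> nat list \<Rightarrow> nat \<Rightarrow> prop_form
    \<Rightarrow> ((nat \<Rightarrow> nat) \<Rightarrow> bool) \<Rightarrow> bool" where
  "defines_prop N I ce k \<psi> P \<longleftrightarrow>
     (\<forall>l e. k \<le> l \<longrightarrow> env_in N l e \<longrightarrow> (sat N I ce e (\<psi> l) \<longleftrightarrow> P e)) \<and> depends_below k P"

lemma env_in_upd: "env_in N l e \<Longrightarrow> d < N \<Longrightarrow> env_in N (Suc l) (e(l := d))"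
  unfolding env_in_def by (auto simp: less_Suc_eq)

lemma env_inD: "env_in N l e \<Longrightarrow> z < l \<Longrightarrow> e z < N"
  unfolding env_in_def by auto

lemma depends_below_upd: "depends_below k f \<Longrightarrow> k \<le> l \<Longrightarrow> f (e(l := d)) = f e"
  unfolding depends_below_def by auto

lemma env_in_upd3:
  "env_in N l e \<Longrightarrow> d1 < N \<Longrightarrow> d2 < N \<Longrightarrow> d3 < N \<Longrightarrow> env_in N (l + 3) (e(l := d1, l+1 := d2, l+2 := d3))"
  unfolding env_in_def by (auto simp: less_Suc_eq numeral_eq_Suc)

lemma depends_below_upd3: "depends_below k f \<Longrightarrow> k \<le> l \<Longrightarrow> f (e(l := d1, l+1 := d2, l+2 := d3)) = f e"
  unfolding depends_below_def by simp

lemma depends_below_mono: "depends_below k f \<Longrightarrow> k \<le> k' \<Longrightarrow> depends_below k' f"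
  unfolding depends_below_def by auto

lemma defines_numD:
  "defines_num N I ce k \<phi> v \<Longrightarrow> k \<le> l \<Longrightarrow> y < l \<Longrightarrow> env_in N l e
    \<Longrightarrow> sat N I ce e (\<phi> l y) \<longleftrightarrow> bit (v e) (e y)"
  unfolding defines_num_def by blast

lemma defines_num_depends: "defines_num N I ce k \<phi> v \<Longrightarrow> depends_below k v"
  unfolding defines_num_def by blast

lemma defines_num_less: "defines_num N I ce k \<phi> v \<Longrightarrow> v e < 2 ^ N"
  unfolding defines_num_def by blast

lemma defines_num_mono: "defines_num N I ce k \<phi> v \<Longrightarrow> k \<le> k' \<Longrightarrow> defines_num N I ce k' \<phi> v"
  unfolding defines_num_def using depends_below_mono by (metis order_trans)

lemma defines_propD:
  "defines_prop N I ce k \<psi> P \<Longrightarrow> k \<le> l \<Longrightarrow> env_in N l e \<Longrightarrow> sat N I ce e (\<psi> l) \<longleftrightarrow> P e"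
  unfolding defines_prop_def by blast

lemma defines_prop_depends: "defines_prop N I ce k \<psi> P \<Longrightarrow> depends_below k P"
  unfolding defines_prop_def by blast

lemma defines_num_upd:
  assumes "defines_num N I ce k \<phi> a" and "k \<le> l" and "env_in N l e" and "d < N" and "y \<le> l"
  shows "sat N I ce (e(l := d)) (\<phi> (Suc l) y) \<longleftrightarrow> bit (a e) ((e(l := d)) y)"
  using defines_numD[OF assms(1) _ _ env_in_upd[OF assms(3,4)], of y]
    depends_below_upd[OF defines_num_depends[OF assms(1)] assms(2)] assms(2,5)
  by simp

lemma defines_num_fresh:
  assumes "defines_num N I ce k \<phi> a" and "k \<le> l" and "env_in N l e" and "d < N"
  shows "sat N I ce (e(l := d)) (\<phi> (Suc l) l) \<longleftrightarrow> bit (a e) d"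
  using defines_num_upd[OF assms order_refl] by simp

lemma defines_num_fresh2:
  assumes "defines_num N I ce k \<phi> a" and "k \<le> l" and "env_in N l e" and "d < N" and "d' < N"
  shows "sat N I ce (e(l := d, Suc l := d')) (\<phi> (Suc (Suc l)) (Suc l)) \<longleftrightarrow> bit (a e) d'"
  using defines_num_fresh[OF assms(1) _ env_in_upd[OF assms(3,4)] assms(5)]
    depends_below_upd[OF defines_num_depends[OF assms(1)] assms(2)] assms(2)
  by simp

text \<open>Bit \<open>y\<close> of a sum is the parity of the two summand bits and the carry into \<open>y\<close>, see
  \<open>carry_iff\<close>.\<close>

definition sum_form :: "num_form \<Rightarrow> num_form \<Rightarrow> num_form" where
  "sum_form \<phi> \<psi> l y = fo_xor (fo_xor (\<phi> l y) (\<psi> l y))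
     (Exi l (Conj (Lt (V l) (V y)) (Conj (\<phi> (Suc l) l) (Conj (\<psi> (Suc l) l)
        (fo_all (Suc l) (fo_imp (Conj (Lt (V l) (V (Suc l))) (Lt (V (Suc l)) (V y)))
             (fo_or (\<phi> (Suc (Suc l)) (Suc l)) (\<psi> (Suc (Suc l)) (Suc l)))))))))"

lemma defines_num_sum_form:
  assumes f: "defines_num N I ce k \<phi> a" and g: "defines_num N I ce k \<psi> b"
    and bound: "\<And>e. a e + b e < 2 ^ N"
  shows "defines_num N I ce k (sum_form \<phi> \<psi>) (\<lambda>e. a e + b e)"
  unfolding defines_num_def
proof (intro conjI allI impI)
  fix l e y assume kl: "k \<le> l" and yl: "y < l" and e: "env_in N l e"
  have yN: "e y < N" using e yl by (rule env_inD)
  have "sat N I ce e (Exi l (Conj (Lt (V l) (V y)) (Conj (\<phi> (Suc l) l) (Conj (\<psi> (Suc l) l)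
        (fo_all (Suc l) (fo_imp (Conj (Lt (V l) (V (Suc l))) (Lt (V (Suc l)) (V y)))
             (fo_or (\<phi> (Suc (Suc l)) (Suc l)) (\<psi> (Suc (Suc l)) (Suc l)))))))))
      \<longleftrightarrow> (\<exists>d<N. d < e y \<and> bit (a e) d \<and> bit (b e) d \<and>
             (\<forall>d'<N. d < d' \<and> d' < e y \<longrightarrow> bit (a e) d' \<or> bit (b e) d'))"
    using yl defines_num_fresh[OF f kl e] defines_num_fresh[OF g kl e]
      defines_num_fresh2[OF f kl e] defines_num_fresh2[OF g kl e]
    by (simp cong: conj_cong)
  also have "\<dots> \<longleftrightarrow> carry (a e) (b e) (e y)"
    unfolding carry_iff using yN by (meson order.strict_trans)
  finally show "sat N I ce e (sum_form \<phi> \<psi> l y) \<longleftrightarrow> bit (a e + b e) (e y)"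
    unfolding sum_form_def bit_add_iff_carry
    using defines_numD[OF f kl yl e] defines_numD[OF g kl yl e] by simp
next
  show "depends_below k (\<lambda>e. a e + b e)"
    using defines_num_depends[OF f] defines_num_depends[OF g] unfolding depends_below_def by metis
qed (rule bound)

definition less_form :: "num_form \<Rightarrow> num_form \<Rightarrow> prop_form" where
  "less_form \<phi> \<psi> l = Exi l (Conj (Neg (\<phi> (Suc l) l)) (Conj (\<psi> (Suc l) l)
      (fo_all (Suc l) (fo_imp (Lt (V l) (V (Suc l)))
         (fo_iff (\<phi> (Suc (Suc l)) (Suc l)) (\<psi> (Suc (Suc l)) (Suc l)))))))"

lemma defines_prop_less_form:
  assumes f: "defines_num N I ce k \<phi> a" and g: "defines_num N I ce k \<psi> b"
  shows "defines_prop N I ce k (less_form \<phi> \<psi>) (\<lambda>e. a e < b e)"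
  unfolding defines_prop_def
proof (intro conjI allI impI)
  fix l e assume kl: "k \<le> l" and e: "env_in N l e"
  have "sat N I ce e (less_form \<phi> \<psi> l) \<longleftrightarrow>
      (\<exists>j<N. \<not> bit (a e) j \<and> bit (b e) j \<and> (\<forall>j'<N. j < j' \<longrightarrow> (bit (a e) j' \<longleftrightarrow> bit (b e) j')))"
    unfolding less_form_def
    using defines_num_fresh[OF f kl e] defines_num_fresh[OF g kl e]
      defines_num_fresh2[OF f kl e] defines_num_fresh2[OF g kl e]
    by (simp cong: conj_cong)
  also have "\<dots> \<longleftrightarrow> a e < b e"
    using less_iff_highest_diff_bit[OF defines_num_less[OF f] defines_num_less[OF g]] by blast
  finally show "sat N I ce e (less_form \<phi> \<psi> l) \<longleftrightarrow> a e < b e" .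
next
  show "depends_below k (\<lambda>e. a e < b e)"
    using defines_num_depends[OF f] defines_num_depends[OF g] unfolding depends_below_def by metis
qed

definition eq_form :: "num_form \<Rightarrow> num_form \<Rightarrow> prop_form" where
  "eq_form \<phi> \<psi> l = Conj (Neg (less_form \<phi> \<psi> l)) (Neg (less_form \<psi> \<phi> l))"

lemma defines_prop_eq_form:
  assumes f: "defines_num N I ce k \<phi> a" and g: "defines_num N I ce k \<psi> b"
  shows "defines_prop N I ce k (eq_form \<phi> \<psi>) (\<lambda>e. a e = b e)"
  unfolding defines_prop_def
proof (intro conjI allI impI)
  fix l e assume "k \<le> l" "env_in N l e"
  then show "sat N I ce e (eq_form \<phi> \<psi> l) \<longleftrightarrow> a e = b e"
    unfolding eq_form_def
    using defines_propD[OF defines_prop_less_form[OF f g]] defines_propD[OF defines_prop_less_form[OF g f]]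
    by auto
next
  show "depends_below k (\<lambda>e. a e = b e)"
    using defines_num_depends[OF f] defines_num_depends[OF g] unfolding depends_below_def by metis
qed

lemma defines_prop_Neg:
  "defines_prop N I ce k \<psi> P \<Longrightarrow> defines_prop N I ce k (\<lambda>l. Neg (\<psi> l)) (\<lambda>e. \<not> P e)"
  unfolding defines_prop_def depends_below_def by simp

definition ite_form :: "prop_form \<Rightarrow> num_form \<Rightarrow> num_form \<Rightarrow> num_form" where
  "ite_form \<chi> \<phi> \<psi> l y = fo_or (Conj (\<chi> l) (\<phi> l y)) (Conj (Neg (\<chi> l)) (\<psi> l y))"

lemma defines_num_ite_form:
  assumes c: "defines_prop N I ce k \<chi> P" and f: "defines_num N I ce k \<phi> a"
    and g: "defines_num N I ce k \<psi> b"
  shows "defines_num N I ce k (ite_form \<chi> \<phi> \<psi>) (\<lambda>e. if P e then a e else b e)"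
  unfolding defines_num_def
proof (intro conjI allI impI)
  fix l e y assume "k \<le> l" "y < l" "env_in N l e"
  then show "sat N I ce e (ite_form \<chi> \<phi> \<psi> l y) \<longleftrightarrow> bit (if P e then a e else b e) (e y)"
    unfolding ite_form_def using defines_propD[OF c] defines_numD[OF f] defines_numD[OF g] by auto
next
  show "depends_below k (\<lambda>e. if P e then a e else b e)"
    using defines_num_depends[OF f] defines_num_depends[OF g] defines_prop_depends[OF c]
    unfolding depends_below_def by metis
qed (use defines_num_less[OF f] defines_num_less[OF g] in auto)

definition zero_form :: num_form where
  "zero_form l y = Neg (Eq (V y) (V y))"

lemma defines_num_zero_form: "defines_num N I ce k zero_form (\<lambda>_. 0)"
  unfolding defines_num_def zero_form_def depends_below_def by auto

fun tm_below :: "nat \<Rightarrow> tm \<Rightarrow> bool" where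
  "tm_below k (V z) \<longleftrightarrow> z < k"
| "tm_below k (C i) \<longleftrightarrow> True"

text \<open>The relation \<open>R\<close> stores, for each tuple \<open>vs\<close> of parameters, the positions of the one bits
  of a number \<open>f vs\<close> in its last component.\<close>

definition rel_form :: "sym \<Rightarrow> tm list \<Rightarrow> num_form" where
  "rel_form R ts l y = Atom R (ts @ [V y])"

lemma tval_less: "tm_below k t \<Longrightarrow> k \<le> l \<Longrightarrow> env_in N l e \<Longrightarrow> \<forall>c\<in>set ce. c < N \<Longrightarrow> 0 < N
    \<Longrightarrow> tval ce e t < N"
  by (cases t) (auto simp: env_in_def)

lemma tval_cong: "tm_below k t \<Longrightarrow> \<forall>z<k. e z = e' z \<Longrightarrow> tval ce e t = tval ce e' t"
  by (cases t) auto

lemma defines_num_rel_form: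
  assumes rel: "\<And>vs j. vs @ [j] \<in> I R \<longleftrightarrow>
      length vs = length ts \<and> (\<forall>v\<in>set vs. v < N) \<and> j < N \<and> bit (f vs) j"
    and less: "\<And>vs. f vs < 2 ^ N" and ts: "\<forall>t\<in>set ts. tm_below k t"
    and ce: "\<forall>c\<in>set ce. c < N" and "0 < N"
  shows "defines_num N I ce k (rel_form R ts) (\<lambda>e. f (map (tval ce e) ts))"
  unfolding defines_num_def
proof (intro conjI allI impI)
  fix l e y assume kl: "k \<le> l" and "y < l" and e: "env_in N l e"
  then have "e y < N" by (simp add: env_inD)
  moreover have "\<forall>v\<in>set (map (tval ce e) ts). v < N"
    using tval_less[OF _ kl e ce \<open>0 < N\<close>] ts by auto
  ultimately show "sat N I ce e (rel_form R ts l y) \<longleftrightarrow> bit (f (map (tval ce e) ts)) (e y)"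
    unfolding rel_form_def using rel by simp
next
  have "map (tval ce e) ts = map (tval ce e') ts" if "\<forall>z<k. e z = e' z" for e e'
    using ts that by (auto intro: tval_cong)
  then show "depends_below k (\<lambda>e. f (map (tval ce e) ts))"
    unfolding depends_below_def by metis
qed (rule less)

lemma defines_num_unary_rel:
  assumes "I R = {[j] | j. j < n \<and> bit v j}" and "v < 2 ^ n" and "n < N"
    and "\<forall>c\<in>set ce. c < N"
  shows "defines_num N I ce k (rel_form R []) (\<lambda>_. v)"
proof -
  have "(2::nat) ^ n \<le> 2 ^ N" using assms(3) by (intro power_increasing) auto
  then have "v < 2 ^ N" using assms(2) by linarith
  moreover have "vs @ [j] \<in> I R \<longleftrightarrow> length vs = length ([] :: tm list) \<and> (\<forall>u\<in>set vs. u < N) \<and> j < N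
      \<and> bit ((\<lambda>_. v) vs) j" for vs j
    using not_bit_ge_length[OF assms(2), of j] assms(1,3) by (cases vs) auto
  ultimately have "defines_num N I ce k (rel_form R []) (\<lambda>e. (\<lambda>_. v) (map (tval ce e) []))"
    using assms(3,4) by (intro defines_num_rel_form) auto
  then show ?thesis by simp
qed

definition shifted_pow_table :: "nat \<Rightarrow> nat \<Rightarrow> nat list set" where
  "shifted_pow_table n kk = {[j + n, 2 ^ j + n] | j. j \<le> kk}"

text \<open>The advice elements are \<open>n, \<dots>, N - 1\<close>, and the advice relation lists the pairs
  \<open>(j, 2 ^ j)\<close>, \<open>j \<le> kk\<close>, of advice elements, each shifted by \<open>n\<close>. The element \<open>n\<close> thus acts as a
  definable origin, and numbers below \<open>2 ^ Suc kk\<close> as well as their powers of two are available as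
  offsets from it.\<close>

locale pow_advice =
  fixes N :: nat and I :: "sym \<Rightarrow> nat list set" and n kk :: nat
  assumes adv_table: "I (SAdv 0) = shifted_pow_table n kk"
    and dom_size: "N = n + 2 ^ Suc kk"
begin

lemma pow_entry_less_dom: "j \<le> kk \<Longrightarrow> j + n < N \<and> 2 ^ j + n < N"
proof -
  assume "j \<le> kk"
  then have "(2::nat) ^ j < 2 ^ Suc kk" by (intro power_strict_increasing) simp_all
  moreover have "j < 2 ^ j" by (rule less_exp)
  ultimately show ?thesis using dom_size by linarith
qed

lemma origin_in_dom: "n < N" and origin_succ_in_dom: "Suc n < N"
  using pow_entry_less_dom[of 0] by simp_all

lemma origin_entry: "[n, Suc n] \<in> I (SAdv 0)"
  unfolding adv_table shifted_pow_table_def by force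

end

definition is_adv_origin :: "nat \<Rightarrow> prop_form" where
  "is_adv_origin x l = Conj (Exi l (Atom (SAdv 0) [V x, V l]))
     (Neg (Exi l (Exi (Suc l) (Conj (Atom (SAdv 0) [V l, V (Suc l)]) (Lt (V l) (V x))))))"

lemma (in pow_advice) sat_is_adv_origin:
  assumes "x \<noteq> l" and "x \<noteq> Suc l"
  shows "sat N I ce e (is_adv_origin x l) \<longleftrightarrow> e x = n"
proof
  assume sat: "sat N I ce e (is_adv_origin x l)"
  then have "\<not> n < e x"
    using assms origin_entry origin_succ_in_dom unfolding is_adv_origin_def by auto
  moreover have "n \<le> e x"
    using sat assms unfolding is_adv_origin_def by (auto simp: adv_table shifted_pow_table_def)
  ultimately show "e x = n" by simp
next
  assume "e x = n"
  then show "sat N I ce e (is_adv_origin x l)"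
    using assms origin_entry origin_in_dom origin_succ_in_dom
    unfolding is_adv_origin_def by (auto simp: adv_table shifted_pow_table_def)
qed

lemma (in pow_advice) sat_is_adv_origin_fresh [simp]:
  "sat N I ce (e(l := d)) (is_adv_origin l (Suc l)) \<longleftrightarrow> d = n"
  by (simp add: sat_is_adv_origin)

text \<open>Capping at \<open>2 ^ n\<close>: the result is \<open>2 ^ n\<close> if some bit at position \<open>\<ge> n\<close> is set.\<close>

definition cap_form :: "num_form \<Rightarrow> num_form" where
  "cap_form \<phi> l y = Exi l (Conj (is_adv_origin l (Suc l))
     (fo_or (Conj (Exi (Suc l) (Conj (Neg (Lt (V (Suc l)) (V l))) (\<phi> (Suc (Suc l)) (Suc l)))) (Eq (V y) (V l)))
          (Conj (Neg (Exi (Suc l) (Conj (Neg (Lt (V (Suc l)) (V l))) (\<phi> (Suc (Suc l)) (Suc l))))) (\<phi> (Suc l) y))))"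

lemma (in pow_advice) defines_num_cap_form:
  assumes f: "defines_num N I ce k \<phi> a"
  shows "defines_num N I ce k (cap_form \<phi>) (\<lambda>e. min (a e) (2 ^ n))"
  unfolding defines_num_def
proof (intro conjI allI impI)
  fix l e y assume kl: "k \<le> l" and yl: "y < l" and e: "env_in N l e"
  have "2 ^ n \<le> a e \<longleftrightarrow> (\<exists>j<N. n \<le> j \<and> bit (a e) j)"
    unfolding two_pow_le_iff_bit using not_bit_ge_length[OF defines_num_less[OF f]] by (meson not_le)
  then have big: "sat N I ce (e(l := n)) (Exi (Suc l) (Conj (Neg (Lt (V (Suc l)) (V l)))
      (\<phi> (Suc (Suc l)) (Suc l)))) \<longleftrightarrow> 2 ^ n \<le> a e"
    using defines_num_fresh2[OF f kl e origin_in_dom] by (auto simp: not_less)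
  show "sat N I ce e (cap_form \<phi> l y) \<longleftrightarrow> bit (min (a e) (2 ^ n)) (e y)"
    unfolding cap_form_def bit_min_two_pow
    using big defines_num_upd[OF f kl e origin_in_dom, of y] yl origin_in_dom by auto
next
  show "depends_below k (\<lambda>e. min (a e) (2 ^ n))"
    using defines_num_depends[OF f] unfolding depends_below_def by metis
next
  show "min (a e) (2 ^ n) < 2 ^ N" for e using defines_num_less[OF f, of e] by simp
qed

text \<open>Bit \<open>j\<close> of \<open>X\<close> is set iff the quotient \<open>q\<close> of \<open>X\<close> by \<open>P = 2 ^ j\<close> is odd; \<open>P\<close> is read off
  the advice relation.\<close>

lemma (in pow_advice) bit_iff_adv_quotient:
  assumes "X < N"
  shows "(\<exists>xx<N. \<exists>yy<N. \<exists>P<N. \<exists>q<N. \<exists>r<N. \<exists>u<N. j + n = xx \<and> [xx, yy] \<in> I (SAdv 0)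
            \<and> P + n = yy \<and> q * P = u \<and> u + r = X \<and> r < P \<and> \<not> (\<exists>h<N. h + h = q))
         \<longleftrightarrow> j \<le> kk \<and> bit X j" (is "?lhs \<longleftrightarrow> _")
proof
  assume ?lhs
  then obtain q r where "j \<le> kk" "q * 2 ^ j + r = X" "r < 2 ^ j" "q < N"
    and q: "\<not> (\<exists>h<N. h + h = q)"
    by (auto simp: adv_table shifted_pow_table_def)
  then have "X div 2 ^ j = q" by auto
  moreover have "odd q"
  proof
    assume "even q"
    then have "q div 2 + q div 2 = q" "q div 2 < N" using \<open>q < N\<close> by auto
    then show False using q by blast
  qed
  ultimately show "j \<le> kk \<and> bit X j" using \<open>j \<le> kk\<close> by (simp add: bit_iff_odd)
next
  assume j: "j \<le> kk \<and> bit X j"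
  define q r where "q = X div 2 ^ j" and "r = X mod 2 ^ j"
  have X: "q * 2 ^ j + r = X" and "r < 2 ^ j" unfolding q_def r_def by (simp_all add: div_mult_mod_eq)
  moreover have "q \<le> q * 2 ^ j" by simp
  ultimately have "q < N" "q * 2 ^ j < N" "r < N" using assms by linarith+
  moreover have "odd q" using j unfolding q_def by (simp add: bit_iff_odd)
  then have "\<not> (\<exists>h<N. h + h = q)" by (metis dvd_triv_left mult_2)
  moreover have "[j + n, 2 ^ j + n] \<in> I (SAdv 0)" "j + n < N" "2 ^ j + n < N" "(2::nat) ^ j < N"
    using j pow_entry_less_dom[of j] by (auto simp: adv_table shifted_pow_table_def)
  ultimately show ?lhs using X \<open>r < 2 ^ j\<close> by blast
qed

definition elem_bits_form :: "nat \<Rightarrow> num_form" where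
  "elem_bits_form x l y = Exi l (Conj (is_adv_origin l (Suc l))
     (Exi (l+1) (Exi (l+2) (Exi (l+3) (Exi (l+4) (Exi (l+5) (Exi (l+6)
       (Conj (Plus (V y) (V l) (V (l+1))) (Conj (Atom (SAdv 0) [V (l+1), V (l+2)])
       (Conj (Plus (V (l+3)) (V l) (V (l+2))) (Conj (Times (V (l+4)) (V (l+3)) (V (l+6)))
       (Conj (Plus (V (l+6)) (V (l+5)) (V x)) (Conj (Lt (V (l+5)) (V (l+3)))
       (Neg (Exi (l+7) (Plus (V (l+7)) (V (l+7)) (V (l+4))))))))))))))))))"

lemma (in pow_advice) defines_num_elem_bits_form:
  assumes "x < k"
  shows "defines_num N I ce k (elem_bits_form x) (\<lambda>e. e x mod 2 ^ Suc kk)"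
  unfolding defines_num_def
proof (intro conjI allI impI)
  fix l e y assume kl: "k \<le> l" and yl: "y < l" and e: "env_in N l e"
  have xl: "x < l" using assms kl by simp
  let ?body = "Exi (l+1) (Exi (l+2) (Exi (l+3) (Exi (l+4) (Exi (l+5) (Exi (l+6)
         (Conj (Plus (V y) (V l) (V (l+1))) (Conj (Atom (SAdv 0) [V (l+1), V (l+2)])
         (Conj (Plus (V (l+3)) (V l) (V (l+2))) (Conj (Times (V (l+4)) (V (l+3)) (V (l+6)))
         (Conj (Plus (V (l+6)) (V (l+5)) (V x)) (Conj (Lt (V (l+5)) (V (l+3)))
         (Neg (Exi (l+7) (Plus (V (l+7)) (V (l+7)) (V (l+4))))))))))))))))"
  have "sat N I ce e (elem_bits_form x l y) \<longleftrightarrow> (\<exists>d<N. d = n \<and> sat N I ce (e(l := d)) ?body)"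
    unfolding elem_bits_form_def by (simp only: sat.simps sat_is_adv_origin_fresh)
  also have "\<dots> \<longleftrightarrow> sat N I ce (e(l := n)) ?body"
    using origin_in_dom by blast
  also have "\<dots> \<longleftrightarrow>
     (\<exists>xx<N. \<exists>yy<N. \<exists>P<N. \<exists>q<N. \<exists>r<N. \<exists>u<N. e y + n = xx \<and> [xx, yy] \<in> I (SAdv 0)
            \<and> P + n = yy \<and> q * P = u \<and> u + r = e x \<and> r < P \<and> \<not> (\<exists>h<N. h + h = q))"
  proof -
    have "x \<noteq> l + 0" "x \<noteq> l + 1" "x \<noteq> l + 2" "x \<noteq> l + 3" "x \<noteq> l + 4" "x \<noteq> l + 5"
      "x \<noteq> l + 6" "x \<noteq> l + 7" "y \<noteq> l + 0" "y \<noteq> l + 1" "y \<noteq> l + 2" "y \<noteq> l + 3"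
      "y \<noteq> l + 4" "y \<noteq> l + 5" "y \<noteq> l + 6" "y \<noteq> l + 7"
      using xl yl by auto
    then show ?thesis by simp
  qed
  also have "\<dots> \<longleftrightarrow> e y \<le> kk \<and> bit (e x) (e y)"
    by (rule bit_iff_adv_quotient[OF env_inD[OF e xl]])
  also have "\<dots> \<longleftrightarrow> bit (take_bit (Suc kk) (e x)) (e y)"
    by (auto simp: bit_take_bit_iff less_Suc_eq_le)
  finally show "sat N I ce e (elem_bits_form x l y) \<longleftrightarrow> bit (e x mod 2 ^ Suc kk) (e y)"
    by (simp only: take_bit_eq_mod)
next
  show "depends_below k (\<lambda>e. e x mod 2 ^ Suc kk)" unfolding depends_below_def using assms by auto
next
  fix e
  have "e x mod 2 ^ Suc kk < (2::nat) ^ Suc kk" by simp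
  also have "\<dots> \<le> N" using dom_size by simp
  also have "N < 2 ^ N" by (rule less_exp)
  finally show "e x mod 2 ^ Suc kk < 2 ^ N" .
qed

definition is_capacity_form :: "nat \<Rightarrow> prop_form" where
  "is_capacity_form b l = Exi l (Conj (is_adv_origin l (Suc l)) (Exi (Suc l) (Plus (V b) (V l) (V (Suc l)))))"

lemma (in pow_advice) defines_prop_is_capacity_form:
  assumes "b < k"
  shows "defines_prop N I ce k (is_capacity_form b) (\<lambda>e. e b < 2 ^ Suc kk)"
  unfolding defines_prop_def
proof (intro conjI allI impI)
  fix l e assume "k \<le> l" and "env_in N l e"
  then have "sat N I ce e (is_capacity_form b l) \<longleftrightarrow> e b + n < N"
    unfolding is_capacity_form_def using assms origin_in_dom by auto
  then show "sat N I ce e (is_capacity_form b l) \<longleftrightarrow> e b < 2 ^ Suc kk"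
    using dom_size by simp
next
  show "depends_below k (\<lambda>e. e b < 2 ^ Suc kk)" unfolding depends_below_def using assms by auto
qed

definition split3_form :: "nat \<Rightarrow> nat \<Rightarrow> nat \<Rightarrow> fo" where
  "split3_form x bv w = Exi w (Conj (Plus (V x) (V (Suc x)) (V w)) (Plus (V w) (V (Suc (Suc x))) (V bv)))"

lemma sat_split3_form:
  assumes "bv \<noteq> w" "x \<noteq> w" "Suc x \<noteq> w" "Suc (Suc x) \<noteq> w" "e bv < N"
  shows "sat N I ce e (split3_form x bv w) \<longleftrightarrow> e x + e (Suc x) + e (Suc (Suc x)) = e bv"
  using assms unfolding split3_form_def by auto

text \<open>\<open>F x\<close> defines a number from summands held in the variables \<open>x\<close>, \<open>x + 1\<close>, \<open>x + 2\<close>; the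
  formula selects a splitting of \<open>e bv\<close> whose value no other splitting exceeds.\<close>

definition max_split_form :: "nat \<Rightarrow> (nat \<Rightarrow> num_form) \<Rightarrow> num_form" where
  "max_split_form bv F l y = Exi l (Exi (l+1) (Exi (l+2) (Conj (split3_form l bv (l+3))
      (Conj (fo_all (l+3) (fo_all (l+4) (fo_all (l+5)
               (fo_imp (split3_form (l+3) bv (l+6)) (Neg (less_form (F l) (F (l+3)) (l+6)))))))
            (F l (l+3) y)))))"

lemma sat_less_form_splits:
  assumes kl: "k \<le> l" and e: "env_in N l e"
    and F: "\<And>x. k \<le> x \<Longrightarrow> defines_num N I ce (x + 3) (F x) (\<lambda>e. G (e x) (e (Suc x)) (e (Suc (Suc x))) e)"
    and G: "\<And>b1 b2 b3. depends_below k (G b1 b2 b3)"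
    and d: "d1 < N" "d2 < N" "d3 < N" and c: "c1 < N" "c2 < N" "c3 < N"
  shows "sat N I ce (e(l := d1, l+1 := d2, l+2 := d3, l+3 := c1, l+4 := c2, l+5 := c3))
      (less_form (F l) (F (l+3)) (l+6)) \<longleftrightarrow> G d1 d2 d3 e < G c1 c2 c3 e"
proof -
  have "env_in N (l + 3 + 3) (e(l := d1, l+1 := d2, l+2 := d3, l+3 := c1, l+3+1 := c2, l+3+2 := c3))"
    by (intro env_in_upd3 e d c)
  then have env: "env_in N (l + 6) (e(l := d1, l+1 := d2, l+2 := d3, l+3 := c1, l+4 := c2, l+5 := c3))"
    by (simp add: numeral_eq_Suc)
  have "defines_num N I ce (l + 6) (F l) (\<lambda>e. G (e l) (e (Suc l)) (e (Suc (Suc l))) e)"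
    using defines_num_mono[OF F[OF kl]] by simp
  moreover have "defines_num N I ce (l + 6) (F (l+3)) (\<lambda>e. G (e (l+3)) (e (Suc (l+3))) (e (Suc (Suc (l+3)))) e)"
    using F[of "l+3"] kl by (simp add: numeral_eq_Suc)
  moreover have "G b1 b2 b3 (e(l := d1, l+1 := d2, l+2 := d3, l+3 := c1, l+4 := c2, l+5 := c3)) = G b1 b2 b3 e"
    for b1 b2 b3
    using G[unfolded depends_below_def] kl by simp
  ultimately show ?thesis
    using defines_propD[OF defines_prop_less_form order_refl env] by (simp add: numeral_eq_Suc)
qed

lemma sat_max_split_form:
  assumes bv: "bv < k" and kl: "k \<le> l" and yl: "y < l" and e: "env_in N l e"
    and F: "\<And>x. k \<le> x \<Longrightarrow> defines_num N I ce (x + 3) (F x) (\<lambda>e. G (e x) (e (Suc x)) (e (Suc (Suc x))) e)"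
    and G: "\<And>b1 b2 b3. depends_below k (G b1 b2 b3)"
  shows "sat N I ce e (max_split_form bv F l y) \<longleftrightarrow>
    (\<exists>d1<N. \<exists>d2<N. \<exists>d3<N. d1 + d2 + d3 = e bv \<and>
      (\<forall>c1<N. \<forall>c2<N. \<forall>c3<N. c1 + c2 + c3 = e bv \<longrightarrow> \<not> G d1 d2 d3 e < G c1 c2 c3 e)
      \<and> bit (G d1 d2 d3 e) (e y))" (is "_ \<longleftrightarrow> ?rhs")
proof -
  have bvN: "e bv < N" using e bv kl by (simp add: env_inD)
  define e1 where "e1 d1 d2 d3 = e(l := d1, l+1 := d2, l+2 := d3)" for d1 d2 d3
  define e2 where "e2 d1 d2 d3 c1 c2 c3 = (e1 d1 d2 d3)(l+3 := c1, l+4 := c2, l+5 := c3)"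
    for d1 d2 d3 c1 c2 c3
  have split1: "sat N I ce (e1 d1 d2 d3) (split3_form l bv (l+3)) \<longleftrightarrow> d1 + d2 + d3 = e bv" for d1 d2 d3
    using sat_split3_form[of bv "l+3" l "e1 d1 d2 d3" N] bv kl bvN unfolding e1_def by auto
  have split2: "sat N I ce (e2 d1 d2 d3 c1 c2 c3) (split3_form (l+3) bv (l+6)) \<longleftrightarrow> c1 + c2 + c3 = e bv"
    for d1 d2 d3 c1 c2 c3
    using sat_split3_form[of bv "l+6" "l+3" "e2 d1 d2 d3 c1 c2 c3" N] bv kl bvN
    unfolding e2_def e1_def by (auto simp: numeral_eq_Suc)
  have less: "sat N I ce (e2 d1 d2 d3 c1 c2 c3) (less_form (F l) (F (l+3)) (l+6))
      \<longleftrightarrow> G d1 d2 d3 e < G c1 c2 c3 e"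
    if "d1 < N" "d2 < N" "d3 < N" "c1 < N" "c2 < N" "c3 < N" for d1 d2 d3 c1 c2 c3
    unfolding e2_def e1_def by (rule sat_less_form_splits[OF kl e F G that])
  have bit_value: "sat N I ce (e1 d1 d2 d3) (F l (l+3) y) \<longleftrightarrow> bit (G d1 d2 d3 e) (e y)"
    if "d1 < N" "d2 < N" "d3 < N" for d1 d2 d3
    using defines_numD[OF F[OF kl] order_refl _ env_in_upd3[OF e that], of y] yl
      depends_below_upd3[OF G kl]
    unfolding e1_def by simp
  have "sat N I ce e (max_split_form bv F l y) \<longleftrightarrow>
      (\<exists>d1<N. \<exists>d2<N. \<exists>d3<N. sat N I ce (e1 d1 d2 d3) (split3_form l bv (l+3)) \<and>
        (\<forall>c1<N. \<forall>c2<N. \<forall>c3<N. sat N I ce (e2 d1 d2 d3 c1 c2 c3) (split3_form (l+3) bv (l+6)) \<longrightarrow>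
          \<not> sat N I ce (e2 d1 d2 d3 c1 c2 c3) (less_form (F l) (F (l+3)) (l+6)))
        \<and> sat N I ce (e1 d1 d2 d3) (F l (l+3) y))"
    unfolding max_split_form_def e2_def e1_def by (simp only: sat.simps sat_fo_connectives)
  also have "\<dots> \<longleftrightarrow> ?rhs"
    by (intro ex_less_cong conj_cong refl) (simp_all add: split1 split2 less bit_value)
  finally show ?thesis .
qed

lemma defines_num_max_split_form:
  assumes bv: "bv < k"
    and F: "\<And>x. k \<le> x \<Longrightarrow> defines_num N I ce (x + 3) (F x) (\<lambda>e. G (e x) (e (Suc x)) (e (Suc (Suc x))) e)"
    and G: "\<And>b1 b2 b3. depends_below k (G b1 b2 b3)" and G_less: "\<And>b1 b2 b3 e. G b1 b2 b3 e < 2 ^ N"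
  shows "defines_num N I ce k (max_split_form bv F)
    (\<lambda>e. Max {G b1 b2 b3 e | b1 b2 b3. b1 + b2 + b3 = e bv})"
  unfolding defines_num_def
proof (intro conjI allI impI)
  fix l e y assume kl: "k \<le> l" and "y < l" and e: "env_in N l e"
  have "e bv < N" using bv kl e by (simp add: env_inD)
  then show "sat N I ce e (max_split_form bv F l y)
      \<longleftrightarrow> bit (Max {G b1 b2 b3 e | b1 b2 b3. b1 + b2 + b3 = e bv}) (e y)"
    using bit_Max_splits3_iff[of "e bv" N "\<lambda>d1 d2 d3. G d1 d2 d3 e" "e y"]
      sat_max_split_form[OF bv kl \<open>y < l\<close> e F G] by (simp only:)
next
  show "depends_below k (\<lambda>e. Max {G b1 b2 b3 e | b1 b2 b3. b1 + b2 + b3 = e bv})"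
    unfolding depends_below_def
  proof (intro allI impI)
    fix e e' :: "nat \<Rightarrow> nat" assume agree: "\<forall>z<k. e z = e' z"
    have "G b1 b2 b3 e = G b1 b2 b3 e'" for b1 b2 b3
      using agree G[of b1 b2 b3] unfolding depends_below_def by blast
    moreover have "e bv = e' bv" using agree bv by blast
    ultimately show "Max {G b1 b2 b3 e | b1 b2 b3. b1 + b2 + b3 = e bv}
        = Max {G b1 b2 b3 e' | b1 b2 b3. b1 + b2 + b3 = e' bv}" by simp
  qed
next
  fix e
  obtain b1 b2 b3 where "Max {G b1 b2 b3 e | b1 b2 b3. b1 + b2 + b3 = e bv} = G b1 b2 b3 e"
    by (rule Max_splits3_in)
  then show "Max {G b1 b2 b3 e | b1 b2 b3. b1 + b2 + b3 = e bv} < 2 ^ N" using G_less by simp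
qed

definition covers_item_form :: "nat \<Rightarrow> nat \<Rightarrow> prop_form" where
  "covers_item_form s t l = Conj (Neg (Lt (C 0) (V s))) (Lt (C 0) (V t))"

definition is_next_item_form :: "nat \<Rightarrow> prop_form" where
  "is_next_item_form v l = Conj (Lt (C 0) (V v)) (Neg (Exi l (Conj (Lt (C 0) (V l)) (Lt (V l) (V v)))))"

definition is_zero_form :: "nat \<Rightarrow> prop_form" where
  "is_zero_form s l = Neg (Exi l (Lt (V l) (V s)))"

definition is_last_form :: "nat \<Rightarrow> prop_form" where
  "is_last_form t l = Neg (Exi l (Lt (V t) (V l)))"

lemma defines_prop_covers_item_form:
  "s < k \<Longrightarrow> t < k \<Longrightarrow> defines_prop N I [i] k (covers_item_form s t) (\<lambda>e. e s \<le> i \<and> i < e t)"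
  unfolding defines_prop_def depends_below_def covers_item_form_def by (auto simp: not_less)

lemma defines_prop_is_next_item_form:
  assumes "v < k"
  shows "defines_prop N I [i] k (is_next_item_form v) (\<lambda>e. e v = Suc i)"
  unfolding defines_prop_def
proof (intro conjI allI impI)
  fix l e assume "k \<le> l" "env_in N l e"
  then have "e v < N" "v \<noteq> l" using assms by (auto simp: env_inD)
  then show "sat N I [i] e (is_next_item_form v l) \<longleftrightarrow> e v = Suc i"
    unfolding is_next_item_form_def by auto
qed (use assms in \<open>auto simp: depends_below_def\<close>)

lemma defines_prop_is_zero_form: "s < k \<Longrightarrow> 0 < N \<Longrightarrow> defines_prop N I ce k (is_zero_form s) (\<lambda>e. e s = 0)"
  unfolding defines_prop_def depends_below_def is_zero_form_def by auto

lemma defines_prop_is_last_form: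
  assumes "t < k"
  shows "defines_prop N I ce k (is_last_form t) (\<lambda>e. e t = N - 1)"
  unfolding defines_prop_def
proof (intro conjI allI impI)
  fix l e assume "k \<le> l" "env_in N l e"
  then have "e t < N" "t \<noteq> l" using assms by (auto simp: env_inD)
  moreover have "(\<exists>d<N. e t < d) \<longleftrightarrow> e t < N - 1" using \<open>e t < N\<close> by (auto intro: exI[of _ "N - 1"])
  ultimately show "sat N I ce e (is_last_form t l) \<longleftrightarrow> e t = N - 1"
    unfolding is_last_form_def by auto
qed (use assms in \<open>auto simp: depends_below_def\<close>)

section \<open>The dynamic program\<close>

definition pow_table :: "nat \<Rightarrow> nat list set" where
  "pow_table k = {[j, 2 ^ j] | j. j \<le> k}"

definition ks_advice :: "nat \<Rightarrow> advice" where
  "ks_advice k = (2 ^ Suc k, \<lambda>j. if j = 0 then pow_table k else {})"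

definition opt_table :: "nat \<Rightarrow> nat \<Rightarrow> ks_input \<Rightarrow> nat list set" where
  "opt_table n kk x = {[s, t, b, j] | s t b j. s < n + 2 ^ Suc kk \<and> t < n + 2 ^ Suc kk
      \<and> b < n + 2 ^ Suc kk \<and> j < n + 2 ^ Suc kk \<and> bit (capped_opt n kk x s t b) j}"

definition capped_opt_list :: "nat \<Rightarrow> nat \<Rightarrow> ks_input \<Rightarrow> nat list \<Rightarrow> nat" where
  "capped_opt_list n kk x vs = (case vs of [s, t, b] \<Rightarrow> capped_opt n kk x s t b | _ \<Rightarrow> 0)"

definition ks_inv :: "nat \<Rightarrow> nat \<Rightarrow> ks_input \<Rightarrow> (nat \<Rightarrow> nat list set) \<Rightarrow> bool" where
  "ks_inv n kk x aux \<longleftrightarrow> (\<forall>i\<ge>n. kp x i = 0) \<and> kB x < 2 ^ n \<and> kT x < 2 ^ n \<and> aux 1 = opt_table n kk x"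

abbreviation tuple_env :: "nat list \<Rightarrow> nat \<Rightarrow> nat" where
  "tuple_env t \<equiv> \<lambda>v. if v < length t then t ! v else 0"

text \<open>The query holds iff some \<open>s = 0\<close>, \<open>t = N - 1\<close> and capacity \<open>b\<close> whose bits are those defined
  by \<open>Bg\<close> satisfy \<open>R\<close>; variables \<open>0, 1, 2\<close> hold \<open>s, t, b\<close>.\<close>

definition query_form :: "num_form \<Rightarrow> prop_form \<Rightarrow> fo" where
  "query_form Bg R = Exi 0 (Exi 1 (Exi 2 (Conj (is_zero_form 0 3) (Conj (is_last_form 1 3)
      (Conj (is_capacity_form 2 3) (Conj (eq_form (elem_bits_form 2) Bg 3) (R 3)))))))"

definition threshold_query_form :: "num_form \<Rightarrow> num_form \<Rightarrow> fo" where
  "threshold_query_form Bg Tg = query_form Bg (\<lambda>l. Neg (less_form (rel_form (SAux 1) [V 0, V 1, V 2]) Tg l))"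

definition table_form :: fo where
  "table_form = Atom (SAux 1) [V 0, V 1, V 2, V 3]"

definition item_value_form :: "nat \<Rightarrow> num_form" where
  "item_value_form z = ite_form (\<lambda>l. Neg (less_form (elem_bits_form z) (rel_form (SCh 1) []) l))
     (rel_form (SCh 0) []) zero_form"

definition split_value_form :: "nat \<Rightarrow> nat \<Rightarrow> nat \<Rightarrow> nat \<Rightarrow> num_form" where
  "split_value_form a iv tv z = sum_form (sum_form (rel_form (SAux 1) [V a, C 0, V z]) (item_value_form (Suc z)))
     (rel_form (SAux 1) [V iv, V tv, V (Suc (Suc z))])"

definition new_opt_form :: "nat \<Rightarrow> nat \<Rightarrow> nat \<Rightarrow> nat \<Rightarrow> num_form" where
  "new_opt_form a iv tv bv = cap_form (max_split_form bv (split_value_form a iv tv))"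

definition item_query_form :: fo where
  "item_query_form = query_form (rel_form SB [])
     (\<lambda>l. Exi l (Conj (is_next_item_form l (Suc l)) (Neg (less_form (new_opt_form 0 l 1 2) (rel_form ST []) (Suc l)))))"

definition item_table_form :: fo where
  "item_table_form = fo_or (Conj (Neg (covers_item_form 0 1 4)) table_form)
     (Conj (covers_item_form 0 1 4) (Conj (is_capacity_form 2 4)
       (Exi 4 (Conj (is_next_item_form 4 5) (new_opt_form 0 4 1 2 5 3)))))"

text \<open>Auxiliary relation 0 is the query, relation 1 holds \<open>opt_table\<close>.\<close>

definition ks_update :: "ks_op \<Rightarrow> nat \<Rightarrow> fo" where
  "ks_update op j = (if j = 0 then
       (case op of
          OpItem \<Rightarrow> item_query_form
        | OpB \<Rightarrow> threshold_query_form (rel_form (SCh 0) []) (rel_form ST [])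
        | OpT \<Rightarrow> threshold_query_form (rel_form SB []) (rel_form (SCh 0) []))
     else (case op of OpItem \<Rightarrow> item_table_form | _ \<Rightarrow> table_form))"

lemma (in pow_advice) sat_query_form:
  assumes Bg: "defines_num N I ce 3 Bg (\<lambda>_. Bv)" and Bv: "Bv < 2 ^ Suc kk"
    and R: "defines_prop N I ce 3 R (\<lambda>e. Q (e 0) (e 1) (e 2))"
  shows "sat N I ce (\<lambda>_. 0) (query_form Bg R) \<longleftrightarrow> Q 0 (N - 1) Bv"
proof -
  have env: "env_in N 3 ((\<lambda>_. 0)(0 := s, 1 := t, 2 := b))" if "s < N" "t < N" "b < N" for s t b
    using that unfolding env_in_def by (auto simp: less_Suc_eq numeral_eq_Suc)
  have body: "sat N I ce ((\<lambda>_. 0)(0 := s, 1 := t, 2 := b)) (Conj (is_zero_form 0 3) (Conj (is_last_form 1 3)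
      (Conj (is_capacity_form 2 3) (Conj (eq_form (elem_bits_form 2) Bg 3) (R 3)))))
      \<longleftrightarrow> s = 0 \<and> t = N - 1 \<and> b < 2 ^ Suc kk \<and> b mod 2 ^ Suc kk = Bv \<and> Q s t b"
    if "s < N" "t < N" "b < N" for s t b
    using defines_propD[OF defines_prop_is_zero_form order_refl env[OF that]]
      defines_propD[OF defines_prop_is_last_form order_refl env[OF that]]
      defines_propD[OF defines_prop_is_capacity_form order_refl env[OF that]]
      defines_propD[OF defines_prop_eq_form[OF defines_num_elem_bits_form Bg] order_refl env[OF that]]
      defines_propD[OF R order_refl env[OF that]] origin_in_dom
    by simp
  have "sat N I ce (\<lambda>_. 0) (query_form Bg R)
      \<longleftrightarrow> (\<exists>s<N. \<exists>t<N. \<exists>b<N. s = 0 \<and> t = N - 1 \<and> b < 2 ^ Suc kk \<and> b mod 2 ^ Suc kk = Bv \<and> Q s t b)"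
    unfolding query_form_def sat.simps(8) by (intro ex_less_cong) (rule body)
  also have "\<dots> \<longleftrightarrow> Q 0 (N - 1) Bv"
  proof
    assume "Q 0 (N - 1) Bv"
    moreover have "0 < N" "N - 1 < N" "Bv < N" using Bv dom_size by simp_all
    ultimately show "\<exists>s<N. \<exists>t<N. \<exists>b<N. s = 0 \<and> t = N - 1 \<and> b < 2 ^ Suc kk \<and> b mod 2 ^ Suc kk = Bv
        \<and> Q s t b"
      using Bv by (intro bex3I[of 0 N "N - 1" Bv]) simp_all
  qed auto
  finally show ?thesis .
qed

lemma ks_struct_simps:
  "ks_struct n x aux (ks_advice kk) cs (SAux j) = aux j"
  "ks_struct n x aux (ks_advice kk) cs (SAdv 0) = shifted_pow_table n kk"
  "ks_struct n x aux (ks_advice kk) cs SB = {[j] | j. j < n \<and> bit (kB x) j}"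
  "ks_struct n x aux (ks_advice kk) cs ST = {[j] | j. j < n \<and> bit (kT x) j}"
  "j < length cs \<Longrightarrow> ks_struct n x aux (ks_advice kk) cs (SCh j) = {[i] | i. i \<in> cs ! j}"
proof -
  have "map (\<lambda>v. v + n) ` pow_table kk = shifted_pow_table n kk"
    unfolding pow_table_def shifted_pow_table_def by (auto intro: image_eqI[of _ _ "[_, 2 ^ _]"])
  then show "ks_struct n x aux (ks_advice kk) cs (SAdv 0) = shifted_pow_table n kk"
    unfolding ks_struct_def ks_advice_def by simp
qed (auto simp: ks_struct_def)

lemma pow_advice_ks_struct: "pow_advice (n + 2 ^ Suc kk) (ks_struct n x aux (ks_advice kk) cs) n kk"
  by unfold_locales (simp_all add: ks_struct_simps)

text \<open>\<open>kk\<close> is the bound on the capacity for which the advice was chosen.\<close>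

locale ks_state =
  fixes n kk :: nat and x :: ks_input and aux :: "nat \<Rightarrow> nat list set"
  assumes inv: "ks_inv n kk x aux"
begin

abbreviation N :: nat where "N \<equiv> n + 2 ^ Suc kk"

abbreviation I :: "nat set list \<Rightarrow> sym \<Rightarrow> nat list set" where
  "I cs \<equiv> ks_struct n x aux (ks_advice kk) cs"

lemma n_less_N: "n < N"
  by simp

lemma three_two_pow_less: "3 * 2 ^ n < (2::nat) ^ N"
proof -
  have "(2::nat) \<le> 2 ^ Suc kk" by simp
  then have "(2::nat) ^ (n + 2) \<le> 2 ^ N" by (intro power_increasing) simp_all
  moreover have "3 * 2 ^ n < (2::nat) ^ (n + 2)" by simp
  ultimately show ?thesis by linarith
qed

lemma defines_num_B: "\<forall>c\<in>set ce. c < N \<Longrightarrow> defines_num N (I cs) ce k (rel_form SB []) (\<lambda>_. kB x)"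
  using inv n_less_N by (intro defines_num_unary_rel) (auto simp: ks_struct_simps ks_inv_def)

lemma defines_num_T: "\<forall>c\<in>set ce. c < N \<Longrightarrow> defines_num N (I cs) ce k (rel_form ST []) (\<lambda>_. kT x)"
  using inv n_less_N by (intro defines_num_unary_rel) (auto simp: ks_struct_simps ks_inv_def)

lemma defines_num_change_param:
  "j < length cs \<Longrightarrow> cs ! j = bitset n v \<Longrightarrow> v < 2 ^ n \<Longrightarrow> \<forall>c\<in>set ce. c < N
    \<Longrightarrow> defines_num N (I cs) ce k (rel_form (SCh j) []) (\<lambda>_. v)"
  using n_less_N by (intro defines_num_unary_rel) (auto simp: ks_struct_simps bitset_def)

lemma capped_opt_less: "capped_opt n kk x s t b < 2 ^ N"
  using capped_opt_le[of n kk x s t b] three_two_pow_less by linarith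

lemma opt_table_iff:
  "vs @ [j] \<in> opt_table n kk x \<longleftrightarrow>
    length vs = 3 \<and> (\<forall>v\<in>set vs. v < N) \<and> j < N \<and> bit (capped_opt_list n kk x vs) j"
  unfolding opt_table_def capped_opt_list_def
  by (auto simp: Suc_length_conv numeral_eq_Suc split: list.splits)

lemma defines_num_opt_table:
  assumes "length ts = 3" and "\<forall>t\<in>set ts. tm_below k t" and "\<forall>c\<in>set ce. c < N"
  shows "defines_num N (I cs) ce k (rel_form (SAux 1) ts) (\<lambda>e. capped_opt_list n kk x (map (tval ce e) ts))"
proof (rule defines_num_rel_form[OF _ _ assms(2,3)])
  show "vs @ [j] \<in> I cs (SAux 1) \<longleftrightarrow>
      length vs = length ts \<and> (\<forall>v\<in>set vs. v < N) \<and> j < N \<and> bit (capped_opt_list n kk x vs) j" for vs j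
    using inv assms(1) opt_table_iff by (simp add: ks_struct_simps ks_inv_def)
  show "capped_opt_list n kk x vs < 2 ^ N" for vs
    using capped_opt_less unfolding capped_opt_list_def by (simp split: list.splits)
qed simp

lemma sat_table_form:
  "s < N \<Longrightarrow> t < N \<Longrightarrow> b < N \<Longrightarrow> j < N
    \<Longrightarrow> sat N (I cs) ce (tuple_env [s, t, b, j]) table_form \<longleftrightarrow> bit (capped_opt n kk x s t b) j"
  using inv opt_table_iff[of "[s, t, b]" j]
  by (simp add: table_form_def ks_struct_simps ks_inv_def capped_opt_list_def)

lemma sat_threshold_query_form:
  assumes "defines_num N (I cs) ce 3 Bg (\<lambda>_. Bv)" and "Bv < 2 ^ Suc kk"
    and "defines_num N (I cs) ce 3 Tg (\<lambda>_. Tv)" and "\<forall>c\<in>set ce. c < N"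
  shows "sat N (I cs) ce (\<lambda>_. 0) (threshold_query_form Bg Tg) \<longleftrightarrow> \<not> capped_opt n kk x 0 (N - 1) Bv < Tv"
proof -
  interpret pow_advice N "I cs" n kk by (rule pow_advice_ks_struct)
  have "defines_num N (I cs) ce 3 (rel_form (SAux 1) [V 0, V 1, V 2]) (\<lambda>e. capped_opt n kk x (e 0) (e 1) (e 2))"
    using defines_num_opt_table[of "[V 0, V 1, V 2]" 3 ce] assms(4) by (simp add: capped_opt_list_def)
  then show ?thesis
    unfolding threshold_query_form_def
    by (intro sat_query_form assms(1,2) defines_prop_Neg defines_prop_less_form assms(3))
qed

context
  fixes i p w :: nat
  assumes item: "i < n" and p: "p < 2 ^ n" and w: "w < 2 ^ n"
begin

abbreviation I\<^sub>i :: "sym \<Rightarrow> nat list set" where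
  "I\<^sub>i \<equiv> I [bitset n p, bitset n w]"

lemma ce_item: "\<forall>c\<in>set [i]. c < N"
  using item by simp

lemma next_item_less_N: "Suc i < N"
  using item n_less_N by linarith

lemma defines_num_item_value_form:
  assumes "z < k"
  shows "defines_num N I\<^sub>i [i] k (item_value_form z) (\<lambda>e. if \<not> e z mod 2 ^ Suc kk < w then p else 0)"
proof -
  interpret pow_advice N I\<^sub>i n kk by (rule pow_advice_ks_struct)
  show ?thesis
    unfolding item_value_form_def
    by (intro defines_num_ite_form defines_prop_Neg defines_prop_less_form defines_num_elem_bits_form
        defines_num_change_param defines_num_zero_form ce_item) (use assms p w in simp_all)
qed

lemma defines_num_split_value_form:
  assumes "a < k" "iv < k" "tv < k" "k \<le> z"
  shows "defines_num N I\<^sub>i [i] (z + 3) (split_value_form a iv tv z)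
    (\<lambda>e. item_split_value n kk x p w (e a) i (e iv) (e tv) (e z) (e (Suc z)) (e (Suc (Suc z))))"
proof -
  have left: "defines_num N I\<^sub>i [i] (z + 3) (rel_form (SAux 1) [V a, C 0, V z]) (\<lambda>e. capped_opt n kk x (e a) i (e z))"
    using defines_num_opt_table[of "[V a, C 0, V z]" "z + 3" "[i]"] ce_item assms
    by (simp add: capped_opt_list_def)
  have right: "defines_num N I\<^sub>i [i] (z + 3) (rel_form (SAux 1) [V iv, V tv, V (Suc (Suc z))])
      (\<lambda>e. capped_opt n kk x (e iv) (e tv) (e (Suc (Suc z))))"
    using defines_num_opt_table[of "[V iv, V tv, V (Suc (Suc z))]" "z + 3" "[i]"] ce_item assms
    by (simp add: capped_opt_list_def)
  have "capped_opt n kk x s t b + (if c then p else 0) + capped_opt n kk x s' t' b' < 2 ^ N"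
    for s t b c s' t' b'
    using capped_opt_le[of n kk x s t b] capped_opt_le[of n kk x s' t' b'] p three_two_pow_less by auto
  moreover have "capped_opt n kk x s t b + (if c then p else 0) < 2 ^ N" for s t b c
    using capped_opt_le[of n kk x s t b] p three_two_pow_less by auto
  ultimately show ?thesis
    unfolding split_value_form_def item_split_value_def
    by (intro defines_num_sum_form left right defines_num_item_value_form) (use assms in simp_all)
qed

lemma defines_num_new_opt_form:
  assumes "a < k" "iv < k" "tv < k" "bv < k"
  shows "defines_num N I\<^sub>i [i] k (new_opt_form a iv tv bv)
    (\<lambda>e. min (Max {item_split_value n kk x p w (e a) i (e iv) (e tv) b1 b2 b3 | b1 b2 b3. b1 + b2 + b3 = e bv})
      (2 ^ n))"
proof -
  interpret pow_advice N I\<^sub>i n kk by (rule pow_advice_ks_struct)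
  have "item_split_value n kk x p w s i iv' tv' b1 b2 b3 < 2 ^ N" for s iv' tv' b1 b2 b3
    using capped_opt_le[of n kk x s i b1] capped_opt_le[of n kk x iv' tv' b3] p three_two_pow_less
    unfolding item_split_value_def by auto
  then show ?thesis
    unfolding new_opt_form_def
    by (intro defines_num_cap_form defines_num_max_split_form[OF assms(4)] defines_num_split_value_form)
      (use assms in \<open>auto simp: depends_below_def\<close>)
qed

lemma sat_item_query_form:
  assumes "kB x \<le> kk"
  shows "sat N I\<^sub>i [i] (\<lambda>_. 0) item_query_form \<longleftrightarrow> knapsack n (ks_apply (ChItem i p w) x)"
proof -
  interpret pow_advice N I\<^sub>i n kk by (rule pow_advice_ks_struct)
  let ?x = "ks_apply (ChItem i p w) x"
  let ?Q = "\<lambda>s iv t b. \<not> min (Max {item_split_value n kk x p w s i iv t b1 b2 b3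
      | b1 b2 b3. b1 + b2 + b3 = b}) (2 ^ n) < kT x"
  have B: "kB x < 2 ^ Suc kk" using assms less_exp[of "Suc kk"] by linarith
  have "defines_prop N I\<^sub>i [i] 3 (\<lambda>l. Exi l (Conj (is_next_item_form l (Suc l))
      (Neg (less_form (new_opt_form 0 l 1 2) (rel_form ST []) (Suc l))))) (\<lambda>e. ?Q (e 0) (Suc i) (e 1) (e 2))"
    unfolding defines_prop_def
  proof (intro conjI allI impI)
    fix l e assume l: "3 \<le> l" and e: "env_in N l e"
    have "sat N I\<^sub>i [i] (e(l := d)) (is_next_item_form l (Suc l)) \<longleftrightarrow> d = Suc i" if "d < N" for d
      using defines_propD[OF defines_prop_is_next_item_form order_refl env_in_upd[OF e that]] by simp
    moreover have "sat N I\<^sub>i [i] (e(l := d)) (less_form (new_opt_form 0 l 1 2) (rel_form ST []) (Suc l))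
        \<longleftrightarrow> \<not> ?Q (e 0) d (e 1) (e 2)" if "d < N" for d
      using defines_propD[OF defines_prop_less_form[OF defines_num_new_opt_form[of 0 "Suc l" l 1 2]
          defines_num_T[OF ce_item]] order_refl env_in_upd[OF e that]] l
      by simp
    moreover note next_item_less_N
    ultimately show "sat N I\<^sub>i [i] e (Exi l (Conj (is_next_item_form l (Suc l))
        (Neg (less_form (new_opt_form 0 l 1 2) (rel_form ST []) (Suc l))))) \<longleftrightarrow> ?Q (e 0) (Suc i) (e 1) (e 2)"
      by (auto intro!: exI[of _ "Suc i"])
  qed (simp add: depends_below_def)
  then have "sat N I\<^sub>i [i] (\<lambda>_. 0) item_query_form \<longleftrightarrow> ?Q 0 (Suc i) (N - 1) (kB x)"
    unfolding item_query_form_def by (rule sat_query_form[OF defines_num_B[OF ce_item] B])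
  also have "\<dots> \<longleftrightarrow> \<not> capped_opt n kk ?x 0 (N - 1) (kB ?x) < kT ?x"
    using capped_opt_item_update[of 0 i "N - 1" "kB x" kk n x p w] item B by simp
  also have "\<dots> \<longleftrightarrow> knapsack n ?x"
    using inv B item unfolding ks_inv_def by (intro knapsack_iff_capped_opt[symmetric]) auto
  finally show ?thesis .
qed

lemma sat_new_opt_at_next_item:
  assumes e: "env_in N 4 e"
  shows "sat N I\<^sub>i [i] e (Exi 4 (Conj (is_next_item_form 4 5) (new_opt_form 0 4 1 2 5 3))) \<longleftrightarrow>
    bit (min (Max {item_split_value n kk x p w (e 0) i (Suc i) (e 1) b1 b2 b3 | b1 b2 b3. b1 + b2 + b3 = e 2})
      (2 ^ n)) (e 3)"
proof -
  have new_opt: "defines_num N I\<^sub>i [i] 5 (new_opt_form 0 4 1 2)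
      (\<lambda>e. min (Max {item_split_value n kk x p w (e 0) i (e 4) (e 1) b1 b2 b3 | b1 b2 b3. b1 + b2 + b3 = e 2})
        (2 ^ n))"
    by (rule defines_num_new_opt_form) simp_all
  have env: "env_in N 5 (e(4 := d))" if "d < N" for d
    using env_in_upd[OF e that] by (simp add: numeral_eq_Suc)
  have "sat N I\<^sub>i [i] (e(4 := d)) (is_next_item_form 4 5) \<longleftrightarrow> d = Suc i" if "d < N" for d
    using defines_propD[OF defines_prop_is_next_item_form order_refl env[OF that]] by (simp add: numeral_eq_Suc)
  moreover have "sat N I\<^sub>i [i] (e(4 := d)) (new_opt_form 0 4 1 2 5 3) \<longleftrightarrow>
      bit (min (Max {item_split_value n kk x p w (e 0) i d (e 1) b1 b2 b3 | b1 b2 b3. b1 + b2 + b3 = e 2})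
        (2 ^ n)) (e 3)"
    if "d < N" for d
    using defines_numD[OF new_opt order_refl _ env[OF that], of 3] by (simp add: numeral_eq_Suc)
  ultimately show ?thesis using next_item_less_N by (auto intro!: exI[of _ "Suc i"])
qed

lemma sat_item_table_form:
  assumes "s < N" "t < N" "b < N" "j < N"
  shows "sat N I\<^sub>i [i] (tuple_env [s, t, b, j]) item_table_form
    \<longleftrightarrow> bit (capped_opt n kk (ks_apply (ChItem i p w) x) s t b) j"
proof -
  interpret pow_advice N I\<^sub>i n kk by (rule pow_advice_ks_struct)
  have e: "env_in N 4 (tuple_env [s, t, b, j])"
    using assms unfolding env_in_def by (auto simp: less_Suc_eq numeral_eq_Suc)
  have covers: "sat N I\<^sub>i [i] (tuple_env [s, t, b, j]) (covers_item_form 0 1 4) \<longleftrightarrow> s \<le> i \<and> i < t"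
    using defines_propD[OF defines_prop_covers_item_form order_refl e] by simp
  have capacity: "sat N I\<^sub>i [i] (tuple_env [s, t, b, j]) (is_capacity_form 2 4) \<longleftrightarrow> b < 2 ^ Suc kk"
    using defines_propD[OF defines_prop_is_capacity_form order_refl e] by simp
  show ?thesis
  proof (cases "s \<le> i \<and> i < t")
    case False
    then have "capped_opt n kk x s t b = capped_opt n kk (ks_apply (ChItem i p w) x) s t b"
      by (intro capped_opt_cong) auto
    then show ?thesis
      unfolding item_table_form_def using covers False sat_table_form[OF assms] by simp
  next
    case True
    then show ?thesis
      unfolding item_table_form_def
      using covers capacity sat_new_opt_at_next_item[OF e] capped_opt_item_update[of s i t b kk n x p w]
      by (cases "b < 2 ^ Suc kk") (auto simp: capped_opt_def)
  qed
qed

end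

lemma capped_opt_threshold_change:
  "c = ChB v \<or> c = ChT v \<Longrightarrow> capped_opt n kk (ks_apply c x) s t b = capped_opt n kk x s t b"
  by (auto intro: capped_opt_cong)

lemma sat_capacity_query_form:
  assumes "v < 2 ^ n" and "v \<le> kk"
  shows "sat N (I [bitset n v]) [] (\<lambda>_. 0) (threshold_query_form (rel_form (SCh 0) []) (rel_form ST []))
    \<longleftrightarrow> knapsack n (ks_apply (ChB v) x)"
proof -
  have "v < 2 ^ Suc kk" using assms(2) less_exp[of "Suc kk"] by linarith
  then have "sat N (I [bitset n v]) [] (\<lambda>_. 0) (threshold_query_form (rel_form (SCh 0) []) (rel_form ST []))
      \<longleftrightarrow> \<not> capped_opt n kk x 0 (N - 1) v < kT x"
    using assms(1) by (intro sat_threshold_query_form defines_num_change_param defines_num_T) simp_all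
  also have "\<dots> \<longleftrightarrow> knapsack n (ks_apply (ChB v) x)"
    using inv \<open>v < 2 ^ Suc kk\<close> capped_opt_threshold_change[of "ChB v" v]
    unfolding ks_inv_def by (subst knapsack_iff_capped_opt) auto
  finally show ?thesis .
qed

lemma sat_threshold_change_query_form:
  assumes "v < 2 ^ n" and "kB x \<le> kk"
  shows "sat N (I [bitset n v]) [] (\<lambda>_. 0) (threshold_query_form (rel_form SB []) (rel_form (SCh 0) []))
    \<longleftrightarrow> knapsack n (ks_apply (ChT v) x)"
proof -
  have "kB x < 2 ^ Suc kk" using assms(2) less_exp[of "Suc kk"] by linarith
  then have "sat N (I [bitset n v]) [] (\<lambda>_. 0) (threshold_query_form (rel_form SB []) (rel_form (SCh 0) []))
      \<longleftrightarrow> \<not> capped_opt n kk x 0 (N - 1) (kB x) < v"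
    using assms(1) by (intro sat_threshold_query_form defines_num_change_param defines_num_B) simp_all
  also have "\<dots> \<longleftrightarrow> knapsack n (ks_apply (ChT v) x)"
    using inv assms(1) \<open>kB x < 2 ^ Suc kk\<close> capped_opt_threshold_change[of "ChT v" v]
    unfolding ks_inv_def by (subst knapsack_iff_capped_opt) auto
  finally show ?thesis .
qed

lemma sat_ks_update_query:
  assumes "ks_valid n c" and "kB (ks_apply c x) \<le> kk"
  shows "sat N (I (ks_sets n c)) (ks_elems c) (\<lambda>_. 0) (ks_update (ks_op_of c) 0)
    \<longleftrightarrow> knapsack n (ks_apply c x)"
  using assms sat_item_query_form sat_capacity_query_form sat_threshold_change_query_form
  by (cases c) (simp_all add: ks_update_def)

lemma sat_ks_update_table:
  assumes "ks_valid n c" and "s < N" "t < N" "b < N" "j < N"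
  shows "sat N (I (ks_sets n c)) (ks_elems c) (tuple_env [s, t, b, j]) (ks_update (ks_op_of c) 1)
    \<longleftrightarrow> bit (capped_opt n kk (ks_apply c x) s t b) j"
proof (cases c)
  case (ChItem i p w)
  then show ?thesis using assms sat_item_table_form by (simp add: ks_update_def)
next
  case (ChB v)
  then show ?thesis
    using assms sat_table_form capped_opt_threshold_change[of c v] by (simp add: ks_update_def)
next
  case (ChT v)
  then show ?thesis
    using assms sat_table_form capped_opt_threshold_change[of c v] by (simp add: ks_update_def)
qed

end

lemma ks_step_Pair:
  "ks_step aux_ar upd n a c (x, aux) = (ks_apply c x, \<lambda>j. if j < length aux_ar then
     {t. length t = aux_ar ! j \<and> (\<forall>v\<in>set t. v < n + fst a) \<and>
       sat (n + fst a) (ks_struct n x aux a (ks_sets n c)) (ks_elems c) (tuple_env t) (upd (ks_op_of c) j)}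
     else {})"
  by (simp add: ks_step_def Let_def)

lemma fst_ks_advice: "fst (ks_advice k) = 2 ^ Suc k"
  by (simp add: ks_advice_def)

lemma (in ks_state) ks_step_correct:
  assumes "ks_valid n c" and "kB (ks_apply c x) \<le> kk"
  shows "fst (ks_step [0, 4] ks_update n (ks_advice kk) c (x, aux)) = ks_apply c x"
    and "ks_inv n kk (ks_apply c x) (snd (ks_step [0, 4] ks_update n (ks_advice kk) c (x, aux)))"
    and "[] \<in> snd (ks_step [0, 4] ks_update n (ks_advice kk) c (x, aux)) 0 \<longleftrightarrow> knapsack n (ks_apply c x)"
proof -
  have "{t. length t = 4 \<and> (\<forall>v\<in>set t. v < N) \<and>
      sat N (I (ks_sets n c)) (ks_elems c) (tuple_env t) (ks_update (ks_op_of c) 1)} = opt_table n kk (ks_apply c x)"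
  proof (intro set_eqI iffI)
    fix t assume "t \<in> opt_table n kk (ks_apply c x)"
    then show "t \<in> {t. length t = 4 \<and> (\<forall>v\<in>set t. v < N) \<and>
        sat N (I (ks_sets n c)) (ks_elems c) (tuple_env t) (ks_update (ks_op_of c) 1)}"
      unfolding opt_table_def using sat_ks_update_table[OF assms(1)] by auto
  next
    fix t assume t: "t \<in> {t. length t = 4 \<and> (\<forall>v\<in>set t. v < N) \<and>
        sat N (I (ks_sets n c)) (ks_elems c) (tuple_env t) (ks_update (ks_op_of c) 1)}"
    then obtain s t' b j where "t = [s, t', b, j]" by (auto simp: numeral_eq_Suc length_Suc_conv)
    then show "t \<in> opt_table n kk (ks_apply c x)"
      unfolding opt_table_def using t sat_ks_update_table[OF assms(1)] by auto
  qed
  then have "snd (ks_step [0, 4] ks_update n (ks_advice kk) c (x, aux)) 1 = opt_table n kk (ks_apply c x)"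
    by (simp add: ks_step_Pair fst_ks_advice)
  moreover have "(\<forall>i\<ge>n. kp (ks_apply c x) i = 0) \<and> kB (ks_apply c x) < 2 ^ n \<and> kT (ks_apply c x) < 2 ^ n"
    using inv assms(1) unfolding ks_inv_def by (cases c) auto
  ultimately show "ks_inv n kk (ks_apply c x) (snd (ks_step [0, 4] ks_update n (ks_advice kk) c (x, aux)))"
    unfolding ks_inv_def by simp
  show "fst (ks_step [0, 4] ks_update n (ks_advice kk) c (x, aux)) = ks_apply c x"
    by (simp add: ks_step_Pair fst_ks_advice)
  show "[] \<in> snd (ks_step [0, 4] ks_update n (ks_advice kk) c (x, aux)) 0 \<longleftrightarrow> knapsack n (ks_apply c x)"
    using sat_ks_update_query[OF assms] by (simp add: ks_step_Pair fst_ks_advice)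
qed

lemma ks_inv_empty: "ks_inv n kk ks_empty (\<lambda>_. {})"
proof -
  have "opt_table n kk ks_empty = {}"
    unfolding opt_table_def capped_opt_def ks_opt_empty_input by simp
  then show ?thesis unfolding ks_inv_def by (simp add: ks_empty_def)
qed

lemma ks_run_correct:
  assumes "\<forall>c\<in>set cs. ks_valid n c" and "\<forall>l\<le>length cs. kB (fold ks_apply (take l cs) ks_empty) \<le> kk"
  shows "fst (ks_run [0, 4] ks_update n (ks_advice kk) cs) = fold ks_apply cs ks_empty
    \<and> ks_inv n kk (fst (ks_run [0, 4] ks_update n (ks_advice kk) cs)) (snd (ks_run [0, 4] ks_update n (ks_advice kk) cs))
    \<and> (cs \<noteq> [] \<longrightarrow> ([] \<in> snd (ks_run [0, 4] ks_update n (ks_advice kk) cs) 0 \<longleftrightarrow> knapsack n (fold ks_apply cs ks_empty)))"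
  using assms
proof (induction cs rule: rev_induct)
  case Nil
  then show ?case unfolding ks_run_def using ks_inv_empty by simp
next
  case (snoc c cs)
  have valid: "\<forall>c\<in>set cs. ks_valid n c" using snoc.prems(1) by simp
  have bounded: "\<forall>l\<le>length cs. kB (fold ks_apply (take l cs) ks_empty) \<le> kk"
  proof (intro allI impI)
    fix l assume "l \<le> length cs"
    then show "kB (fold ks_apply (take l cs) ks_empty) \<le> kk" using snoc.prems(2)[rule_format, of l] by simp
  qed
  obtain x aux where run: "ks_run [0, 4] ks_update n (ks_advice kk) cs = (x, aux)"
    by (cases "ks_run [0, 4] ks_update n (ks_advice kk) cs")
  then have x: "x = fold ks_apply cs ks_empty" and inv: "ks_inv n kk x aux"
    using snoc.IH[OF valid bounded] by auto
  interpret ks_state n kk x aux by (rule ks_state.intro[OF inv])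
  have "ks_run [0, 4] ks_update n (ks_advice kk) (cs @ [c]) = ks_step [0, 4] ks_update n (ks_advice kk) c (x, aux)"
    using run unfolding ks_run_def by simp
  moreover have "kB (ks_apply c x) \<le> kk"
    using snoc.prems(2)[rule_format, of "Suc (length cs)"] x by simp
  moreover have "fold ks_apply (cs @ [c]) ks_empty = ks_apply c x" using x by simp
  ultimately show ?case using ks_step_correct snoc.prems(1) by simp
qed

section \<open>Computability of the advice\<close>

lemma reval_RZ: "y = 0 \<Longrightarrow> reval RZ xs y"
  using reval.intros(1) by simp

lemma reval_RS: "y = Suc x \<Longrightarrow> reval RS (x # xs) y"
  using reval.intros(2) by simp

lemma reval_RProj: "i < length xs \<Longrightarrow> y = xs ! i \<Longrightarrow> reval (RProj i) xs y"
  using reval.intros(3) by simp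

lemma reval_RComp1: "reval g xs y \<Longrightarrow> reval f [y] z \<Longrightarrow> reval (RComp f [g]) xs z"
  by (rule reval.intros(4)) auto

lemma reval_RComp2:
  "reval g1 xs y1 \<Longrightarrow> reval g2 xs y2 \<Longrightarrow> reval f [y1, y2] z \<Longrightarrow> reval (RComp f [g1, g2]) xs z"
  by (rule reval.intros(4)) auto

lemma reval_RPrim:
  assumes "reval f xs a" and "\<And>y m. reval g (y # m # xs) (h m y)"
  shows "reval (RPrim f g) (n # xs) (rec_nat a h n)"
proof (induction n)
  case 0
  then show ?case using assms(1) reval.intros(5) by simp
next
  case (Suc n)
  then show ?case using assms(2) reval.intros(6) by simp
qed

definition rf_one :: recf where
  "rf_one = RComp RS [RZ]"

lemma reval_rf_one: "z = 1 \<Longrightarrow> reval rf_one xs z"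
  unfolding rf_one_def by (rule reval_RComp1[OF reval_RZ reval_RS]) auto

definition rf_add :: recf where
  "rf_add = RPrim (RProj 0) (RComp RS [RProj 0])"

lemma reval_rf_add: "z = a + b \<Longrightarrow> reval rf_add [a, b] z"
proof -
  have "reval rf_add [a, b] (rec_nat b (\<lambda>_ y. Suc y) a)"
    unfolding rf_add_def by (rule reval_RPrim) (auto intro!: reval_RProj reval_RComp1 reval_RS)
  moreover have "rec_nat b (\<lambda>_ y. Suc y) a = a + b" by (induction a) auto
  ultimately show "z = a + b \<Longrightarrow> reval rf_add [a, b] z" by simp
qed

definition rf_pred :: recf where
  "rf_pred = RPrim RZ (RProj 1)"

lemma reval_rf_pred: "z = a - 1 \<Longrightarrow> reval rf_pred [a] z"
proof -
  have "reval rf_pred [a] (rec_nat 0 (\<lambda>m _. m) a)"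
    unfolding rf_pred_def by (rule reval_RPrim) (auto intro!: reval_RProj reval_RZ)
  moreover have "rec_nat 0 (\<lambda>m _. m) a = a - 1" by (cases a) auto
  ultimately show "z = a - 1 \<Longrightarrow> reval rf_pred [a] z" by simp
qed

text \<open>Argument order: \<open>rf_diff\<close> applied to \<open>[b, a]\<close> computes \<open>a - b\<close>.\<close>

definition rf_diff :: recf where
  "rf_diff = RPrim (RProj 0) (RComp rf_pred [RProj 0])"

lemma reval_rf_diff: "z = a - b \<Longrightarrow> reval rf_diff [b, a] z"
proof -
  have "reval rf_diff [b, a] (rec_nat a (\<lambda>_ y. y - 1) b)"
    unfolding rf_diff_def by (rule reval_RPrim) (auto intro!: reval_RProj reval_RComp1 reval_rf_pred)
  moreover have "rec_nat a (\<lambda>_ y. y - 1) b = a - b" by (induction b) auto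
  ultimately show "z = a - b \<Longrightarrow> reval rf_diff [b, a] z" by simp
qed

definition rf_eq :: recf where
  "rf_eq =
    RComp rf_diff [RComp rf_add [RComp rf_diff [RProj 1, RProj 0], RComp rf_diff [RProj 0, RProj 1]], rf_one]"

lemma reval_rf_eq: "z = (if a = b then 1 else 0) \<Longrightarrow> reval rf_eq [a, b] z"
proof -
  have ab: "reval (RComp rf_diff [RProj 1, RProj 0]) [a, b] (a - b)"
    and ba: "reval (RComp rf_diff [RProj 0, RProj 1]) [a, b] (b - a)"
    by (rule reval_RComp2[OF reval_RProj reval_RProj reval_rf_diff]; simp)+
  have "reval rf_eq [a, b] (1 - ((a - b) + (b - a)))"
    unfolding rf_eq_def
    by (rule reval_RComp2[OF reval_RComp2[OF ab ba reval_rf_add] reval_rf_one reval_rf_diff]) auto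
  moreover have "1 - ((a - b) + (b - a)) = (if a = b then 1 else 0)" by auto
  ultimately show "z = (if a = b then 1 else 0) \<Longrightarrow> reval rf_eq [a, b] z" by simp
qed

definition rf_pow2 :: recf where
  "rf_pow2 = RPrim rf_one (RComp rf_add [RProj 0, RProj 0])"

lemma reval_rf_pow2: "z = 2 ^ a \<Longrightarrow> reval rf_pow2 [a] z"
proof -
  have "reval rf_pow2 [a] (rec_nat 1 (\<lambda>_ y. y + y) a)"
    unfolding rf_pow2_def
    by (rule reval_RPrim) (auto intro!: reval_RProj reval_RComp2 reval_rf_add reval_rf_one)
  moreover have "rec_nat 1 (\<lambda>_ y. y + y) a = (2::nat) ^ a" by (induction a) auto
  ultimately show "z = 2 ^ a \<Longrightarrow> reval rf_pow2 [a] z" by simp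
qed

definition rf_triangle :: recf where
  "rf_triangle = RPrim RZ (RComp rf_add [RProj 0, RComp RS [RProj 1]])"

lemma reval_rf_triangle: "z = triangle a \<Longrightarrow> reval rf_triangle [a] z"
proof -
  have "reval rf_triangle [a] (rec_nat 0 (\<lambda>m y. y + Suc m) a)"
    unfolding rf_triangle_def
    by (rule reval_RPrim)
      (auto intro!: reval_RProj reval_RComp2 reval_RComp1 reval_rf_add reval_RZ reval_RS)
  moreover have "rec_nat 0 (\<lambda>m y. y + Suc m) a = triangle a" by (induction a) auto
  ultimately show "z = triangle a \<Longrightarrow> reval rf_triangle [a] z" by simp
qed

definition rf_prod_encode :: recf where
  "rf_prod_encode = RComp rf_add [RComp rf_triangle [RComp rf_add [RProj 0, RProj 1]], RProj 0]"

lemma reval_rf_prod_encode: "z = prod_encode (a, b) \<Longrightarrow> reval rf_prod_encode [a, b] z"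
  unfolding rf_prod_encode_def prod_encode_def
  by (rule reval_RComp2[OF reval_RComp1[OF reval_RComp2[OF reval_RProj reval_RProj reval_rf_add]
        reval_rf_triangle] reval_RProj reval_rf_add]) auto

definition pow_entry_code :: "nat \<Rightarrow> nat" where
  "pow_entry_code j = list_encode [j, 2 ^ j]"

definition rf_pow_entry_code :: recf where
  "rf_pow_entry_code =
    RComp RS [RComp rf_prod_encode [RProj 0, RComp RS [RComp rf_prod_encode [RComp rf_pow2 [RProj 0], RZ]]]]"

lemma reval_rf_pow_entry_code: "z = pow_entry_code j \<Longrightarrow> reval rf_pow_entry_code [j] z"
  unfolding rf_pow_entry_code_def pow_entry_code_def
  by (rule reval_RComp1[OF reval_RComp2[OF reval_RProj reval_RComp1[OF reval_RComp2[OF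
        reval_RComp1[OF reval_RProj reval_rf_pow2] reval_RZ reval_rf_prod_encode] reval_RS]
        reval_rf_prod_encode] reval_RS]) auto

lemma list_decode_eq_iff: "list_decode c = xs \<longleftrightarrow> c = list_encode xs"
  by (metis list_decode_inverse list_encode_inverse)

lemma list_decode_in_pow_table_Suc:
  "list_decode c \<in> pow_table (Suc k) \<longleftrightarrow> list_decode c \<in> pow_table k \<or> c = pow_entry_code (Suc k)"
  unfolding pow_table_def pow_entry_code_def le_Suc_eq
  by (auto simp del: list_encode.simps power_Suc simp: list_decode_eq_iff)

text \<open>Recursion on \<open>k\<close> counts the entries \<open>j \<le> k\<close> whose code is \<open>c\<close>; at most one matches.\<close>

definition rf_pow_table_mem :: recf where
  "rf_pow_table_mem = RPrim (RComp rf_eq [RProj 0, RComp rf_pow_entry_code [RZ]])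
    (RComp rf_add [RProj 0, RComp rf_eq [RProj 2, RComp rf_pow_entry_code [RComp RS [RProj 1]]]])"

lemma reval_rf_pow_table_mem:
  "reval rf_pow_table_mem [k, c] (if list_decode c \<in> pow_table k then 1 else 0)"
proof -
  let ?h = "\<lambda>m y. y + (if c = pow_entry_code (Suc m) then 1 else 0 :: nat)"
  have "reval rf_pow_table_mem [k, c] (rec_nat (if c = pow_entry_code 0 then 1 else 0) ?h k)"
    unfolding rf_pow_table_mem_def
    by (rule reval_RPrim)
      (auto intro!: reval_RComp2 reval_RComp1 reval_RProj reval_RZ reval_RS reval_rf_add
        reval_rf_eq reval_rf_pow_entry_code)
  moreover have "rec_nat (if c = pow_entry_code 0 then 1 else 0) ?h k
      = (if list_decode c \<in> pow_table k then 1 else 0)"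
  proof (induction k)
    case 0
    have "list_decode c \<in> pow_table 0 \<longleftrightarrow> c = pow_entry_code 0"
      unfolding pow_table_def pow_entry_code_def
      by (auto simp del: list_encode.simps simp: list_decode_eq_iff)
    then show ?case by simp
  next
    case (Suc k)
    have "\<not> (list_decode c \<in> pow_table k \<and> c = pow_entry_code (Suc k))"
      unfolding pow_table_def pow_entry_code_def by (auto simp del: list_encode.simps)
    then show ?case using Suc by (auto simp: list_decode_in_pow_table_Suc)
  qed
  ultimately show ?thesis by simp
qed

lemma computable1_two_pow_Suc: "computable1 (\<lambda>k. 2 ^ Suc k)"
proof -
  have "reval (RComp rf_pow2 [RComp RS [RProj 0]]) [k] (2 ^ Suc k)" for k
    by (rule reval_RComp1[OF reval_RComp1[OF reval_RProj reval_RS] reval_rf_pow2]) auto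
  then show ?thesis unfolding computable1_def by blast
qed

lemma computable_ks_advice: "computable_advice [2] ks_advice"
proof -
  have "(if list_decode c \<in> snd (ks_advice k) 0 then 1 else 0) = (if list_decode c \<in> pow_table k then 1 else 0)"
    for k c by (simp add: ks_advice_def)
  then have "computable2 (\<lambda>k c. if list_decode c \<in> snd (ks_advice k) 0 then 1 else 0)"
    unfolding computable2_def using reval_rf_pow_table_mem by metis
  then show ?thesis
    unfolding computable_advice_def fst_ks_advice using computable1_two_pow_Suc by simp
qed

lemma wf_ks_advice: "wf_advice [2] (ks_advice k)"
proof -
  have "j < 2 ^ Suc k \<and> (2::nat) ^ j < 2 ^ Suc k" if "j \<le> k" for j
  proof -
    have "(2::nat) ^ j < 2 ^ Suc k" using that by (intro power_strict_increasing) simp_all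
    moreover have "j < 2 ^ j" by (rule less_exp)
    ultimately show ?thesis by linarith
  qed
  then show ?thesis unfolding wf_advice_def ks_advice_def pow_table_def by auto
qed

theorem proposition16:
  shows "knapsack_in_ParaSD"
  unfolding knapsack_in_ParaSD_def
proof (intro exI conjI allI impI)
  show "[0::nat, 4] \<noteq> []" and "[0::nat, 4] ! 0 = 0" by simp_all
  show "computable1 (\<lambda>k. 2 ^ Suc k)" by (rule computable1_two_pow_Suc)
  show "computable_advice [2] ks_advice" by (rule computable_ks_advice)
  show "wf_advice [2] (ks_advice k)" and "fst (ks_advice k) \<le> 2 ^ Suc k" for k
    by (simp_all add: wf_ks_advice fst_ks_advice)
next
  fix n kmax cs
  assume "cs \<noteq> []" and "\<forall>c\<in>set cs. ks_valid n c"
    and "\<forall>l\<le>length cs. kB (fold ks_apply (take l cs) ks_empty) \<le> kmax"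
  then show "[] \<in> snd (ks_run [0, 4] ks_update n (ks_advice kmax) cs) 0
      \<longleftrightarrow> knapsack n (fold ks_apply cs ks_empty)"
    using ks_run_correct by blast
qed

end
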